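(* Let $\mathfrak{g}$ be a finite-dimensional complex simple Lie algebra. The set $\widetilde{\mathbf{CP}_{\mathfrak{g}}}=\{\tilde f_\phi\}_\phi$, where $\phi$ ranges over all finite-dimensional representations of $\mathfrak{g}$, is a commutative monoid under the resolution product $*$, with unit element $z_0$.
   Context: Fix a Cartan subalgebra $\mathfrak{h}$ with simple roots $\alpha_1,\dots,\alpha_n$ and coroots $h_{\alpha_1},\dots,h_{\alpha_n}$ forming a basis of $\mathfrak{h}$. For a finite-dimensional representation $\phi:\mathfrak{g}\to\mathfrak{gl}(V)$, $\tilde f_\phi(z_0,\dots,z_n)=\det\big(z_0I+\sum_{i=1}^n z_i\phi(h_{\alpha_i})\big)$. If $\Gamma_\phi$ is the set of weights of $\phi$ and $d_\lambda$ the multiplicity of $\lambda\in\Gamma_\phi$, then $\tilde f_\phi=\prod_{\lambda\in\Gamma_\phi}\big(z_0+\sum_{i}\lambda(h_{\alpha_i})z_i\big)^{d_\lambda}$. The resolution product is $\tilde f_\phi*\tilde f_\varphi=\prod_{\lambda\in\Gamma_\phi,\mu\in\Gamma_\varphi}\big(z_0+\sum_{i=1}^n(\lambda(h_{\alpha_i})+\mu(h_{\alpha_i}))z_i\big)^{d_\lambda d_\mu}$. *)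

theory Defs
  imports "Jordan_Normal_Form.Determinant" "HOL-Algebra.Group" "HOL-Library.Multiset"
begin

definition lie_algebra :: "(complex \<Rightarrow> 'g::ab_group_add \<Rightarrow> 'g) \<Rightarrow> ('g \<Rightarrow> 'g \<Rightarrow> 'g) \<Rightarrow> bool" where
  "lie_algebra sc br \<longleftrightarrow> vector_space sc
     \<and> (\<forall>x. Vector_Spaces.linear sc sc (br x))
     \<and> (\<forall>y. Vector_Spaces.linear sc sc (\<lambda>x. br x y))
     \<and> (\<forall>x. br x x = 0)
     \<and> (\<forall>x y z. br x (br y z) + br y (br z x) + br z (br x y) = 0)"

definition finite_dim_lie :: "(complex \<Rightarrow> 'g::ab_group_add \<Rightarrow> 'g) \<Rightarrow> bool" where
  "finite_dim_lie sc \<longleftrightarrow> (\<exists>B. finite B \<and> module.span sc B = UNIV)"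

definition lie_ideal :: "(complex \<Rightarrow> 'g::ab_group_add \<Rightarrow> 'g) \<Rightarrow> ('g \<Rightarrow> 'g \<Rightarrow> 'g) \<Rightarrow> 'g set \<Rightarrow> bool" where
  "lie_ideal sc br I \<longleftrightarrow> module.subspace sc I \<and> (\<forall>x y. y \<in> I \<longrightarrow> br x y \<in> I)"

definition simple_lie :: "(complex \<Rightarrow> 'g::ab_group_add \<Rightarrow> 'g) \<Rightarrow> ('g \<Rightarrow> 'g \<Rightarrow> 'g) \<Rightarrow> bool" where
  "simple_lie sc br \<longleftrightarrow> (\<exists>x y. br x y \<noteq> 0)
     \<and> (\<forall>I. lie_ideal sc br I \<longrightarrow> I = {0} \<or> I = UNIV)"

definition lie_subalgebra :: "(complex \<Rightarrow> 'g::ab_group_add \<Rightarrow> 'g) \<Rightarrow> ('g \<Rightarrow> 'g \<Rightarrow> 'g) \<Rightarrow> 'g set \<Rightarrow> bool" where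
  "lie_subalgebra sc br S \<longleftrightarrow> module.subspace sc S \<and> (\<forall>x\<in>S. \<forall>y\<in>S. br x y \<in> S)"

definition ad_semisimple :: "(complex \<Rightarrow> 'g::ab_group_add \<Rightarrow> 'g) \<Rightarrow> ('g \<Rightarrow> 'g \<Rightarrow> 'g) \<Rightarrow> 'g \<Rightarrow> bool" where
  "ad_semisimple sc br x \<longleftrightarrow> module.span sc {y. \<exists>c. br x y = sc c y} = UNIV"

definition toral :: "(complex \<Rightarrow> 'g::ab_group_add \<Rightarrow> 'g) \<Rightarrow> ('g \<Rightarrow> 'g \<Rightarrow> 'g) \<Rightarrow> 'g set \<Rightarrow> bool" where
  "toral sc br T \<longleftrightarrow> lie_subalgebra sc br T \<and> (\<forall>x\<in>T. ad_semisimple sc br x)"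

text \<open>Cartan subalgebra of a semisimple Lie algebra = maximal toral subalgebra.\<close>
definition cartan_subalgebra :: "(complex \<Rightarrow> 'g::ab_group_add \<Rightarrow> 'g) \<Rightarrow> ('g \<Rightarrow> 'g \<Rightarrow> 'g) \<Rightarrow> 'g set \<Rightarrow> bool" where
  "cartan_subalgebra sc br H \<longleftrightarrow> toral sc br H \<and> (\<forall>T. toral sc br T \<and> H \<subseteq> T \<longrightarrow> T = H)"

definition root_space :: "(complex \<Rightarrow> 'g::ab_group_add \<Rightarrow> 'g) \<Rightarrow> ('g \<Rightarrow> 'g \<Rightarrow> 'g) \<Rightarrow> 'g set \<Rightarrow> ('g \<Rightarrow> complex) \<Rightarrow> 'g set" where
  "root_space sc br H \<alpha> = {x. \<forall>h\<in>H. br h x = sc (\<alpha> h) x}"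

text \<open>Roots, represented as functionals on H extended by 0 outside H.\<close>
definition roots :: "(complex \<Rightarrow> 'g::ab_group_add \<Rightarrow> 'g) \<Rightarrow> ('g \<Rightarrow> 'g \<Rightarrow> 'g) \<Rightarrow> 'g set \<Rightarrow> ('g \<Rightarrow> complex) set" where
  "roots sc br H = {\<alpha>. (\<forall>h. h \<notin> H \<longrightarrow> \<alpha> h = 0) \<and> (\<exists>h\<in>H. \<alpha> h \<noteq> 0)
                      \<and> root_space sc br H \<alpha> \<noteq> {0}}"

definition simple_roots :: "(complex \<Rightarrow> 'g::ab_group_add \<Rightarrow> 'g) \<Rightarrow> ('g \<Rightarrow> 'g \<Rightarrow> 'g) \<Rightarrow> 'g set \<Rightarrow> ('g \<Rightarrow> complex) list \<Rightarrow> bool" where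
  "simple_roots sc br H al \<longleftrightarrow> distinct al \<and> set al \<subseteq> roots sc br H
     \<and> (\<forall>c::nat \<Rightarrow> complex. (\<forall>h\<in>H. (\<Sum>i<length al. c i * (al ! i) h) = 0) \<longrightarrow> (\<forall>i<length al. c i = 0))
     \<and> (\<forall>\<beta>\<in>roots sc br H. \<exists>k::nat \<Rightarrow> int.
          (\<forall>h\<in>H. \<beta> h = (\<Sum>i<length al. of_int (k i) * (al ! i) h))
          \<and> ((\<forall>i<length al. k i \<ge> 0) \<or> (\<forall>i<length al. k i \<le> 0)))"

definition is_coroot :: "(complex \<Rightarrow> 'g::ab_group_add \<Rightarrow> 'g) \<Rightarrow> ('g \<Rightarrow> 'g \<Rightarrow> 'g) \<Rightarrow> 'g set \<Rightarrow> ('g \<Rightarrow> complex) \<Rightarrow> 'g \<Rightarrow> bool" where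
  "is_coroot sc br H \<alpha> h \<longleftrightarrow> h \<in> H \<and> \<alpha> h = 2
     \<and> (\<exists>x y. x \<in> root_space sc br H \<alpha> \<and> y \<in> root_space sc br H (\<lambda>t. - \<alpha> t) \<and> h = br x y)"

definition lie_rep :: "(complex \<Rightarrow> 'g::ab_group_add \<Rightarrow> 'g) \<Rightarrow> ('g \<Rightarrow> 'g \<Rightarrow> 'g) \<Rightarrow> nat \<Rightarrow> ('g \<Rightarrow> complex mat) \<Rightarrow> bool" where
  "lie_rep sc br d \<phi> \<longleftrightarrow> (\<forall>x. \<phi> x \<in> carrier_mat d d)
     \<and> (\<forall>x y. \<phi> (x + y) = \<phi> x + \<phi> y)
     \<and> (\<forall>c x. \<phi> (sc c x) = c \<cdot>\<^sub>m \<phi> x)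
     \<and> (\<forall>x y. \<phi> (br x y) = \<phi> x * \<phi> y - \<phi> y * \<phi> x)"

text \<open>f~_phi(z_0,...,z_n) = det(z_0 I + sum_i z_i phi(h_i)), as a polynomial function of
 z :: nat => complex (only z 0, ..., z n matter); hs = [h_1,...,h_n].\<close>
definition char_poly_fun :: "'g list \<Rightarrow> nat \<Rightarrow> ('g \<Rightarrow> complex mat) \<Rightarrow> (nat \<Rightarrow> complex) \<Rightarrow> complex" where
  "char_poly_fun hs d \<phi> z = det (mat d d (\<lambda>(a, b).
      z 0 * (if a = b then 1 else 0) + (\<Sum>i<length hs. z (Suc i) * (\<phi> (hs ! i) $$ (a, b)))))"

definition CP :: "(complex \<Rightarrow> 'g::ab_group_add \<Rightarrow> 'g) \<Rightarrow> ('g \<Rightarrow> 'g \<Rightarrow> 'g) \<Rightarrow> 'g list \<Rightarrow> ((nat \<Rightarrow> complex) \<Rightarrow> complex) set" where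
  "CP sc br hs = {char_poly_fun hs d \<phi> | d \<phi>. lie_rep sc br d \<phi>}"

definition lin_prod :: "nat \<Rightarrow> complex list multiset \<Rightarrow> (nat \<Rightarrow> complex) \<Rightarrow> complex" where
  "lin_prod n M z = (\<Prod>c\<in>#M. z 0 + (\<Sum>i<n. c ! i * z (Suc i)))"

definition lin_factors :: "nat \<Rightarrow> ((nat \<Rightarrow> complex) \<Rightarrow> complex) \<Rightarrow> complex list multiset" where
  "lin_factors n F = (SOME M. (\<forall>c\<in>#M. length c = n) \<and> F = lin_prod n M)"

text \<open>Resolution product: prod over factors (lambda, mu) of z_0 + sum_i (lambda_i + mu_i) z_i,
 with multiplicities d_lambda d_mu.\<close>
definition res_prod :: "nat \<Rightarrow> ((nat \<Rightarrow> complex) \<Rightarrow> complex) \<Rightarrow> ((nat \<Rightarrow> complex) \<Rightarrow> complex) \<Rightarrow> (nat \<Rightarrow> complex) \<Rightarrow> complex" where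
  "res_prod n F G = lin_prod n (\<Sum>\<^sub># (image_mset (\<lambda>c. image_mset (\<lambda>e. map2 (+) c e) (lin_factors n G)) (lin_factors n F)))"

end

theory Submission
  imports Defs "HOL-Computational_Algebra.Polynomial" "Jordan_Normal_Form.Schur_Decomposition"
    "Jordan_Normal_Form.Matrix_Kernel" "Jordan_Normal_Form.Spectral_Radius" "Jordan_Normal_Form.DL_Rank"
begin

text \<open>The coroots \<open>h\<^sub>i\<close> lie in the Cartan subalgebra, which is toral and hence abelian. So the
  matrices \<open>\<phi>(h\<^sub>i)\<close> of a representation commute and can be triangularized simultaneously by a
  change of basis, which changes neither the representation property nor \<open>f\<^sub>\<phi>\<close>. For triangular
  \<open>\<phi>(h\<^sub>i)\<close>, the polynomial \<open>f\<^sub>\<phi>\<close> is the product of the linear forms \<open>z\<^sub>0 + \<Sum>\<^sub>i \<lambda>(h\<^sub>i) z\<^sub>i\<close>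
  over the diagonal weights \<open>\<lambda>\<close>, and a product of linear forms determines its factors.
  The Kronecker sum \<open>\<phi> \<otimes> 1 + 1 \<otimes> \<psi>\<close> is a representation whose weights are the sums \<open>\<lambda> + \<mu>\<close>,
  so \<open>f\<^sub>\<phi> * f\<^sub>\<psi>\<close> is again of the form \<open>f\<^sub>\<rho>\<close>; the zero representation on \<open>\<complex>\<close> gives \<open>z\<^sub>0\<close>.
  The monoid laws are then those of pairwise sums of multisets of weight vectors.\<close>

section \<open>Toral subalgebras are abelian\<close>

definition shift_prod :: "('a::field \<Rightarrow> 'g::ab_group_add \<Rightarrow> 'g) \<Rightarrow> ('g \<Rightarrow> 'g) \<Rightarrow> 'a list \<Rightarrow> 'g \<Rightarrow> 'g" where
  "shift_prod sc T ns v = foldr (\<lambda>\<nu> w. T w - sc \<nu> w) ns v"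

lemma shift_prod_eigenvector_sum:
  assumes "vector_space sc" and "Vector_Spaces.linear sc sc T"
    and ev: "\<forall>\<mu>\<in>L. T (u \<mu>) = sc \<mu> (u \<mu>)"
  shows "shift_prod sc T ns (\<Sum>\<mu>\<in>L. sc (a \<mu>) (u \<mu>))
    = (\<Sum>\<mu>\<in>L. sc (a \<mu> * (\<Prod>\<nu>\<leftarrow>ns. \<mu> - \<nu>)) (u \<mu>))"
proof (induction ns)
  case Nil
  then show ?case by (simp add: shift_prod_def)
next
  case (Cons \<nu> ns)
  interpret V: vector_space sc by fact
  interpret T: Vector_Spaces.linear sc sc T by fact
  let ?c = "\<lambda>\<mu>. a \<mu> * (\<Prod>\<nu>\<leftarrow>ns. \<mu> - \<nu>)"
  have "shift_prod sc T (\<nu> # ns) (\<Sum>\<mu>\<in>L. sc (a \<mu>) (u \<mu>))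
      = T (\<Sum>\<mu>\<in>L. sc (?c \<mu>) (u \<mu>)) - sc \<nu> (\<Sum>\<mu>\<in>L. sc (?c \<mu>) (u \<mu>))"
    using Cons by (simp add: shift_prod_def)
  also have "\<dots> = (\<Sum>\<mu>\<in>L. sc (?c \<mu> * \<mu>) (u \<mu>)) - (\<Sum>\<mu>\<in>L. sc (?c \<mu> * \<nu>) (u \<mu>))"
    using ev by (simp add: T.sum T.scale V.scale_sum_right mult.commute)
  also have "\<dots> = (\<Sum>\<mu>\<in>L. sc (a \<mu> * (\<Prod>\<nu>\<leftarrow>\<nu> # ns. \<mu> - \<nu>)) (u \<mu>))"
    by (simp add: algebra_simps V.scale_left_diff_distrib sum_subtractf)
  finally show ?case .
qed

lemma shift_prod_zero:
  assumes "vector_space sc" and "Vector_Spaces.linear sc sc T"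
  shows "shift_prod sc T ns 0 = 0"
proof -
  interpret V: vector_space sc by fact
  interpret T: Vector_Spaces.linear sc sc T by fact
  show ?thesis by (induction ns) (auto simp: shift_prod_def)
qed

lemma shift_prod_in_subspace:
  assumes "vector_space sc" and S: "Modules.module.subspace sc S"
    and inv: "\<forall>w\<in>S. T w \<in> S" and "v \<in> S"
  shows "shift_prod sc T ns v \<in> S"
proof -
  interpret V: vector_space sc by fact
  show ?thesis
    by (induction ns) (auto simp: shift_prod_def \<open>v \<in> S\<close> inv V.subspace_diff[OF S] V.subspace_scale[OF S])
qed

lemma shift_prod_isolates_eigen_component:
  assumes "vector_space sc" and "Vector_Spaces.linear sc sc T"
    and "finite L" and "\<mu>\<^sub>0 \<in> L" and ev: "\<forall>\<mu>\<in>L. T (u \<mu>) = sc \<mu> (u \<mu>)"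
  obtains ns c where "c \<noteq> 0"
    and "\<And>a. shift_prod sc T ns (\<Sum>\<mu>\<in>L. sc (a \<mu>) (u \<mu>)) = sc (a \<mu>\<^sub>0 * c) (u \<mu>\<^sub>0)"
proof -
  interpret V: vector_space sc by fact
  obtain ns where ns: "set ns = L - {\<mu>\<^sub>0}"
    using finite_list[of "L - {\<mu>\<^sub>0}"] \<open>finite L\<close> by blast
  have vanish: "(\<Prod>\<nu>\<leftarrow>ns. \<mu> - \<nu>) = 0 \<longleftrightarrow> \<mu> \<in> L - {\<mu>\<^sub>0}" for \<mu>
    unfolding prod_list_zero_iff ns[symmetric] by auto
  define c where "c = (\<Prod>\<nu>\<leftarrow>ns. \<mu>\<^sub>0 - \<nu>)"
  have "c \<noteq> 0"
    unfolding c_def vanish by simp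
  moreover have "shift_prod sc T ns (\<Sum>\<mu>\<in>L. sc (a \<mu>) (u \<mu>)) = sc (a \<mu>\<^sub>0 * c) (u \<mu>\<^sub>0)" for a
  proof -
    have "shift_prod sc T ns (\<Sum>\<mu>\<in>L. sc (a \<mu>) (u \<mu>))
        = (\<Sum>\<mu>\<in>L. sc (a \<mu> * (\<Prod>\<nu>\<leftarrow>ns. \<mu> - \<nu>)) (u \<mu>))"
      by (rule shift_prod_eigenvector_sum[OF assms(1,2) ev])
    also have "\<dots> = sc (a \<mu>\<^sub>0 * c) (u \<mu>\<^sub>0)
        + (\<Sum>\<mu>\<in>L - {\<mu>\<^sub>0}. sc (a \<mu> * (\<Prod>\<nu>\<leftarrow>ns. \<mu> - \<nu>)) (u \<mu>))"
      unfolding c_def by (rule sum.remove[OF \<open>finite L\<close> \<open>\<mu>\<^sub>0 \<in> L\<close>])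
    also have "(\<Sum>\<mu>\<in>L - {\<mu>\<^sub>0}. sc (a \<mu> * (\<Prod>\<nu>\<leftarrow>ns. \<mu> - \<nu>)) (u \<mu>)) = 0"
      using vanish by (intro sum.neutral ballI) (metis V.scale_zero_left mult_zero_right)
    finally show ?thesis
      by simp
  qed
  ultimately show ?thesis
    by (rule that)
qed

lemma eigenvector_sum_decomposition:
  assumes "vector_space sc" and "Vector_Spaces.linear sc sc T"
    and semisimple: "Modules.module.span sc {y. \<exists>c. T y = sc c y} = UNIV"
  obtains L u where "finite L" and "\<forall>\<mu>\<in>L. T (u \<mu>) = sc \<mu> (u \<mu>)" and "v = (\<Sum>\<mu>\<in>L. u \<mu>)"
proof -
  interpret V: vector_space sc by fact
  interpret T: Vector_Spaces.linear sc sc T by fact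
  have "v \<in> V.span {y. \<exists>c. T y = sc c y}"
    using semisimple by simp
  then obtain t r where t: "finite t" "t \<subseteq> {y. \<exists>c. T y = sc c y}" and v: "v = (\<Sum>y\<in>t. sc (r y) y)"
    unfolding V.span_explicit by auto
  from t(2) have "\<forall>y\<in>t. \<exists>c. T y = sc c y"
    by auto
  then obtain e where e: "\<forall>y\<in>t. T y = sc (e y) y"
    by metis
  define u where "u \<mu> = (\<Sum>y\<in>{y\<in>t. e y = \<mu>}. sc (r y) y)" for \<mu>
  have "v = (\<Sum>\<mu>\<in>e ` t. u \<mu>)"
    unfolding v u_def using t(1) by (rule sum.image_gen)
  moreover have "T (u \<mu>) = sc \<mu> (u \<mu>)" for \<mu>
    using e by (simp add: u_def T.sum T.scale V.scale_sum_right mult.commute)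
  ultimately show ?thesis using that t(1) by blast
qed

lemma eigen_component_in_invariant_subspace:
  assumes "vector_space sc" and "Vector_Spaces.linear sc sc T"
    and S: "Modules.module.subspace sc S" and inv: "\<forall>w\<in>S. T w \<in> S"
    and "finite L" and "\<mu> \<in> L" and ev: "\<forall>\<mu>\<in>L. T (u \<mu>) = sc \<mu> (u \<mu>)"
    and sum_in: "(\<Sum>\<mu>\<in>L. u \<mu>) \<in> S"
  shows "u \<mu> \<in> S"
proof -
  interpret V: vector_space sc by fact
  obtain ns c where "c \<noteq> 0" and proj: "\<And>a. shift_prod sc T ns (\<Sum>\<mu>\<in>L. sc (a \<mu>) (u \<mu>)) = sc (a \<mu> * c) (u \<mu>)"
    using shift_prod_isolates_eigen_component[OF assms(1,2,5,6,7)] by blast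
  have "sc c (u \<mu>) \<in> S"
    using shift_prod_in_subspace[OF \<open>vector_space sc\<close> S inv sum_in, of ns] proj[of "\<lambda>_. 1"] by simp
  then have "sc (inverse c) (sc c (u \<mu>)) \<in> S"
    by (rule V.subspace_scale[OF S])
  with \<open>c \<noteq> 0\<close> show ?thesis by simp
qed

lemma semisimple_square_zero:
  assumes "vector_space sc" and "Vector_Spaces.linear sc sc T"
    and semisimple: "Modules.module.span sc {y. \<exists>c. T y = sc c y} = UNIV" and sq: "T (T v) = 0"
  shows "T v = 0"
proof -
  interpret V: vector_space sc by fact
  interpret T: Vector_Spaces.linear sc sc T by fact
  obtain L u where "finite L" and ev: "\<forall>\<mu>\<in>L. T (u \<mu>) = sc \<mu> (u \<mu>)" and v: "v = (\<Sum>\<mu>\<in>L. u \<mu>)"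
    using eigenvector_sum_decomposition[OF assms(1-3)] by blast
  have Tv: "T v = (\<Sum>\<mu>\<in>L. sc \<mu> (u \<mu>))"
    using ev by (simp add: v T.sum)
  have TTv: "T (T v) = (\<Sum>\<mu>\<in>L. sc (\<mu> * \<mu>) (u \<mu>))"
    using ev by (simp add: Tv T.sum T.scale mult.commute)
  have "sc \<mu> (u \<mu>) = 0" if "\<mu> \<in> L" for \<mu>
  proof -
    obtain ns c where "c \<noteq> 0" and proj: "\<And>a. shift_prod sc T ns (\<Sum>\<mu>\<in>L. sc (a \<mu>) (u \<mu>)) = sc (a \<mu> * c) (u \<mu>)"
      using shift_prod_isolates_eigen_component[OF assms(1,2) \<open>finite L\<close> \<open>\<mu> \<in> L\<close> ev] by blast
    have "sc (\<mu> * \<mu> * c) (u \<mu>) = shift_prod sc T ns (T (T v))"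
      using proj[of "\<lambda>\<mu>. \<mu> * \<mu>"] TTv by simp
    also have "\<dots> = 0"
      using sq shift_prod_zero[OF assms(1,2)] by simp
    finally show ?thesis
      using \<open>c \<noteq> 0\<close> by (cases "\<mu> = 0") simp_all
  qed
  then show ?thesis
    unfolding Tv by (simp add: sum.neutral)
qed

lemma lie_bracket_antisym:
  assumes "lie_algebra sc br"
  shows "br a b = - br b a"
proof -
  have linr: "\<And>a. Vector_Spaces.linear sc sc (br a)"
    and linl: "\<And>b. Vector_Spaces.linear sc sc (\<lambda>x. br x b)"
    and alt: "\<And>a. br a a = 0"
    using assms unfolding lie_algebra_def by blast+
  interpret ad: Vector_Spaces.linear sc sc "br (a + b)" by (rule linr)
  interpret ad_a: Vector_Spaces.linear sc sc "\<lambda>x. br x a" by (rule linl)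
  interpret ad_b: Vector_Spaces.linear sc sc "\<lambda>x. br x b" by (rule linl)
  have "0 = br (a + b) (a + b)"
    by (simp only: alt)
  also have "\<dots> = br (a + b) a + br (a + b) b"
    by (rule ad.add)
  also have "br (a + b) a = br a a + br b a"
    by (rule ad_a.add)
  also have "br (a + b) b = br a b + br b b"
    by (rule ad_b.add)
  finally show ?thesis
    by (simp add: alt eq_neg_iff_add_eq_0 add.commute)
qed

text \<open>Decompose \<open>y\<close> into eigenvectors \<open>u \<mu>\<close> of \<open>ad x\<close>; these lie in \<open>H\<close>. For \<open>\<mu> \<noteq> 0\<close>,
  \<open>ad (u \<mu>)\<close> sends \<open>x\<close> to \<open>-\<mu> u \<mu>\<close>, which it kills; semisimplicity of \<open>ad (u \<mu>)\<close>
  then forces \<open>\<mu> u \<mu> = 0\<close>.\<close>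

lemma toral_abelian:
  assumes L: "lie_algebra sc br" and T: "toral sc br H" and "x \<in> H" and "y \<in> H"
  shows "br x y = 0"
proof -
  have V: "vector_space sc" and linr: "\<And>a. Vector_Spaces.linear sc sc (br a)" and alt: "\<And>a. br a a = 0"
    using L unfolding lie_algebra_def by blast+
  interpret V: vector_space sc by fact
  interpret ad_x: Vector_Spaces.linear sc sc "br x" by (rule linr)
  have H: "Modules.module.subspace sc H" and closed: "\<forall>a\<in>H. \<forall>b\<in>H. br a b \<in> H"
    and semisimple: "\<forall>a\<in>H. Modules.module.span sc {y. \<exists>c. br a y = sc c y} = UNIV"
    using T unfolding toral_def lie_subalgebra_def ad_semisimple_def by blast+
  have "Modules.module.span sc {y. \<exists>c. br x y = sc c y} = UNIV"
    using semisimple \<open>x \<in> H\<close> by blast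
  then obtain L u where "finite L" and ev: "\<forall>\<mu>\<in>L. br x (u \<mu>) = sc \<mu> (u \<mu>)" and y: "y = (\<Sum>\<mu>\<in>L. u \<mu>)"
    by (rule eigenvector_sum_decomposition[OF V linr])
  have "sc \<mu> (u \<mu>) = 0" if "\<mu> \<in> L" for \<mu>
  proof -
    have "\<forall>w\<in>H. br x w \<in> H"
      using closed \<open>x \<in> H\<close> by blast
    then have uH: "u \<mu> \<in> H"
      using eigen_component_in_invariant_subspace[OF V linr H _ \<open>finite L\<close> \<open>\<mu> \<in> L\<close> ev]
        \<open>y \<in> H\<close> y by simp
    interpret ad_u: Vector_Spaces.linear sc sc "br (u \<mu>)" by (rule linr)
    have bux: "br (u \<mu>) x = - sc \<mu> (u \<mu>)"
      using lie_bracket_antisym[OF L, of "u \<mu>" x] ev \<open>\<mu> \<in> L\<close> by simp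
    have "br (u \<mu>) (br (u \<mu>) x) = 0"
      by (simp add: bux ad_u.neg ad_u.scale alt)
    moreover have "Modules.module.span sc {y. \<exists>c. br (u \<mu>) y = sc c y} = UNIV"
      using semisimple uH by blast
    ultimately have "br (u \<mu>) x = 0"
      using semisimple_square_zero[OF V linr] by blast
    then show ?thesis
      using bux by simp
  qed
  then show ?thesis
    using ev by (simp add: y ad_x.sum sum.neutral)
qed

section \<open>Products of linear forms\<close>

lemma image_mset_inj_on_eq:
  assumes "inj_on f (set_mset M \<union> set_mset N)" and "image_mset f M = image_mset f N"
  shows "M = N"
  using image_mset_eq_image_mset_plusD[of f M N "{#}"] assms by auto

lemma proots_prod_mset_linear:
  fixes A :: "'a::idom multiset"
  shows "proots (\<Prod>a\<in>#A. [:a, 1:]) = image_mset uminus A"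
proof (induction A)
  case (add a A)
  have "(\<Prod>a\<in>#A. [:a, 1:]) \<noteq> 0"
    by (auto simp: prod_mset_zero_iff)
  then have "proots ([:a, 1:] * (\<Prod>a\<in>#A. [:a, 1:])) = {#-a#} + proots (\<Prod>a\<in>#A. [:a, 1:])"
    by (subst proots_mult) simp_all
  with add show ?case
    by simp
qed simp

lemma prod_mset_linear_inj:
  fixes A B :: "'a::idom multiset"
  assumes "(\<Prod>a\<in>#A. [:a, 1:]) = (\<Prod>a\<in>#B. [:a, 1:])"
  shows "A = B"
proof -
  have "image_mset uminus A = image_mset uminus B"
    using proots_prod_mset_linear[of A] proots_prod_mset_linear[of B] assms by simp
  then show ?thesis
    by (rule image_mset_inj_on_eq[rotated]) simp
qed

text \<open>The point \<open>x\<close> avoids the finitely many roots of the polynomials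
  \<open>\<Sum>i<n. (c ! i - c' ! i) X\<^sup>i\<close> for distinct \<open>c, c' \<in> S\<close>.\<close>
lemma moment_map_inj_on_exists:
  fixes S :: "'a::field_char_0 list set"
  assumes "finite S" and len: "\<forall>c\<in>S. length c = n"
  obtains x where "inj_on (\<lambda>c. \<Sum>i<n. c ! i * x ^ i) S"
proof -
  define q where "q c c' = (\<Sum>i<n. monom (c ! i - c' ! i) i)" for c c' :: "'a list"
  have q_nonzero: "q c c' \<noteq> 0" if "c \<in> S" "c' \<in> S" "c \<noteq> c'" for c c'
  proof
    assume "q c c' = 0"
    have "c ! i = c' ! i" if "i < n" for i
    proof -
      have "coeff (q c c') i = c ! i - c' ! i"
        unfolding q_def coeff_sum coeff_monom using that by (simp add: sum.delta)
      with \<open>q c c' = 0\<close> show ?thesis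
        by simp
    qed
    with that len show False
      by (metis nth_equalityI)
  qed
  define R where "R = (\<Union>p\<in>{p\<in>S \<times> S. fst p \<noteq> snd p}. {x. poly (q (fst p) (snd p)) x = 0})"
  have "finite {p\<in>S \<times> S. fst p \<noteq> snd p}"
    using \<open>finite S\<close> by simp
  then have "finite R"
    unfolding R_def by (rule finite_UN_I) (use q_nonzero in \<open>auto intro!: poly_roots_finite\<close>)
  then obtain x where "x \<notin> R"
    using ex_new_if_finite infinite_UNIV_char_0 by blast
  have "inj_on (\<lambda>c. \<Sum>i<n. c ! i * x ^ i) S"
  proof (rule inj_onI, rule ccontr)
    fix c c' assume "c \<in> S" "c' \<in> S" "c \<noteq> c'"
      and "(\<Sum>i<n. c ! i * x ^ i) = (\<Sum>i<n. c' ! i * x ^ i)"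
    then have "poly (q c c') x = 0"
      by (simp add: q_def poly_sum poly_monom sum_subtractf left_diff_distrib)
    with \<open>c \<in> S\<close> \<open>c' \<in> S\<close> \<open>c \<noteq> c'\<close> \<open>x \<notin> R\<close> show False
      unfolding R_def by force
  qed
  then show ?thesis
    by (rule that)
qed

lemma lin_prod_moment_curve:
  "lin_prod n M (\<lambda>k. if k = 0 then t else x ^ (k - 1))
    = poly (\<Prod>a\<in>#image_mset (\<lambda>c. \<Sum>i<n. c ! i * x ^ i) M. [:a, 1:]) t"
  unfolding lin_prod_def by (simp add: poly_prod_mset multiset.map_comp o_def add.commute)

text \<open>Restricted to the moment curve \<open>z\<^sub>i = x\<^sup>i\<^sup>-\<^sup>1\<close>, a product of linear forms becomes a
  univariate polynomial in \<open>z\<^sub>0\<close> whose roots determine the forms, for a generic \<open>x\<close>.\<close>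
lemma lin_prod_inj:
  assumes "\<forall>c\<in>#M. length c = n" and "\<forall>c\<in>#N. length c = n"
    and eq: "lin_prod n M = lin_prod n N"
  shows "M = N"
proof -
  obtain x where inj: "inj_on (\<lambda>c. \<Sum>i<n. c ! i * x ^ i) (set_mset M \<union> set_mset N)"
    using moment_map_inj_on_exists[of "set_mset M \<union> set_mset N" n] assms(1,2) by blast
  let ?s = "\<lambda>c. \<Sum>i<n. c ! i * x ^ i"
  have "poly (\<Prod>a\<in>#image_mset ?s M. [:a, 1:]) t = poly (\<Prod>a\<in>#image_mset ?s N. [:a, 1:]) t" for t
    using lin_prod_moment_curve[of n M t x] lin_prod_moment_curve[of n N t x] eq by simp
  then have "(\<Prod>a\<in>#image_mset ?s M. [:a, 1:]) = (\<Prod>a\<in>#image_mset ?s N. [:a, 1:])"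
    by (simp add: poly_eq_poly_eq_iff[symmetric] fun_eq_iff)
  then have "image_mset ?s M = image_mset ?s N"
    by (rule prod_mset_linear_inj)
  then show ?thesis
    by (rule image_mset_inj_on_eq[OF inj])
qed

lemma lin_factors_lin_prod:
  assumes "\<forall>c\<in>#M. length c = n"
  shows "lin_factors n (lin_prod n M) = M"
proof -
  have "\<exists>M'. (\<forall>c\<in>#M'. length c = n) \<and> lin_prod n M = lin_prod n M'"
    using assms by blast
  then have "(\<forall>c\<in>#lin_factors n (lin_prod n M). length c = n)
      \<and> lin_prod n M = lin_prod n (lin_factors n (lin_prod n M))"
    unfolding lin_factors_def by (rule someI_ex)
  then show ?thesis
    using lin_prod_inj[OF assms] by metis
qed

definition minkowski_mset :: "'a::plus list multiset \<Rightarrow> 'a list multiset \<Rightarrow> 'a list multiset" where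
  "minkowski_mset M N = \<Sum>\<^sub># (image_mset (\<lambda>c. image_mset (\<lambda>e. map2 (+) c e) N) M)"

lemma minkowski_mset_empty_left [simp]: "minkowski_mset {#} N = {#}"
  by (simp add: minkowski_mset_def)

lemma minkowski_mset_add_mset_left [simp]:
  "minkowski_mset (add_mset c M) N = image_mset (map2 (+) c) N + minkowski_mset M N"
  by (simp add: minkowski_mset_def)

lemma minkowski_mset_union_left:
  "minkowski_mset (M + M') N = minkowski_mset M N + minkowski_mset M' N"
  by (induction M) (simp_all add: add.assoc)

lemma minkowski_mset_empty_right [simp]: "minkowski_mset M {#} = {#}"
  by (induction M) simp_all

lemma minkowski_mset_add_mset_right:
  "minkowski_mset M (add_mset e N) = image_mset (\<lambda>c. map2 (+) c e) M + minkowski_mset M N"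
  by (induction M) (simp_all add: ac_simps)

lemma map2_plus_commute: "map2 (+) a b = map2 (+) b (a :: 'a::ab_semigroup_add list)"
  by (rule nth_equalityI) (auto simp: add.commute)

lemma map2_plus_assoc: "map2 (+) (map2 (+) a b) c = map2 (+) a (map2 (+) b (c :: 'a::semigroup_add list))"
  by (rule nth_equalityI) (auto simp: add.assoc)

lemma minkowski_mset_commute:
  fixes M N :: "'a::ab_semigroup_add list multiset"
  shows "minkowski_mset M N = minkowski_mset N M"
  by (induction M) (simp_all add: minkowski_mset_add_mset_right map2_plus_commute)

lemma minkowski_mset_image_left:
  fixes N P :: "'a::semigroup_add list multiset"
  shows "minkowski_mset (image_mset (map2 (+) c) N) P = image_mset (map2 (+) c) (minkowski_mset N P)"
  by (induction N) (simp_all add: multiset.map_comp o_def map2_plus_assoc)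

lemma minkowski_mset_assoc:
  fixes M N P :: "'a::semigroup_add list multiset"
  shows "minkowski_mset (minkowski_mset M N) P = minkowski_mset M (minkowski_mset N P)"
  by (induction M) (simp_all add: minkowski_mset_union_left minkowski_mset_image_left)

lemma minkowski_mset_zero_left:
  fixes M :: "'a::monoid_add list multiset"
  assumes "\<forall>e\<in>#M. length e = n"
  shows "minkowski_mset {#replicate n 0#} M = M"
proof -
  have "map2 (+) (replicate n 0) e = e" if "e \<in># M" for e
    using assms that by (intro nth_equalityI) auto
  then show ?thesis
    by (simp add: image_mset_cong)
qed

lemma minkowski_mset_length:
  assumes "\<forall>c\<in>#M. length c = n" and "\<forall>e\<in>#N. length e = n"
  shows "\<forall>c\<in>#minkowski_mset M N. length c = n"
  using assms by (auto simp: minkowski_mset_def)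

lemma lin_prod_minkowski_mset:
  "lin_prod n (minkowski_mset M N) z = (\<Prod>c\<in>#M. \<Prod>e\<in>#N. z 0 + (\<Sum>i<n. map2 (+) c e ! i * z (Suc i)))"
  by (induction M) (simp_all add: lin_prod_def multiset.map_comp o_def)

lemma res_prod_lin_prod:
  assumes "\<forall>c\<in>#M. length c = n" and "\<forall>e\<in>#N. length e = n"
  shows "res_prod n (lin_prod n M) (lin_prod n N) = lin_prod n (minkowski_mset M N)"
  using assms by (simp add: res_prod_def lin_factors_lin_prod minkowski_mset_def)

lemma lin_prod_zero_weight: "lin_prod n {#replicate n 0#} = (\<lambda>z. z 0)"
  by (simp add: lin_prod_def fun_eq_iff)

lemma comm_monoid_res_prod:
  assumes lin: "C \<subseteq> lin_prod n ` {M. \<forall>c\<in>#M. length c = n}"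
    and one: "(\<lambda>z. z 0) \<in> C" and closed: "\<forall>F\<in>C. \<forall>G\<in>C. res_prod n F G \<in> C"
  shows "comm_monoid \<lparr>carrier = C, monoid.mult = res_prod n, one = (\<lambda>z. z 0)\<rparr>"
proof (rule comm_monoidI; simp only: partial_object.simps monoid.simps)
  have factors: "\<exists>M. (\<forall>c\<in>#M. length c = n) \<and> F = lin_prod n M" if "F \<in> C" for F
    using lin that by blast
  fix F G K assume F: "F \<in> C" and G: "G \<in> C" and K: "K \<in> C"
  obtain M where M: "\<forall>c\<in>#M. length c = n" and F_eq: "F = lin_prod n M"
    using factors[OF F] by blast
  obtain N where N: "\<forall>c\<in>#N. length c = n" and G_eq: "G = lin_prod n N"
    using factors[OF G] by blast
  obtain P where P: "\<forall>c\<in>#P. length c = n" and K_eq: "K = lin_prod n P"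
    using factors[OF K] by blast
  show "res_prod n F G \<in> C"
    using closed F G by blast
  have "res_prod n (res_prod n F G) K = lin_prod n (minkowski_mset (minkowski_mset M N) P)"
    unfolding F_eq G_eq K_eq res_prod_lin_prod[OF M N] by (rule res_prod_lin_prod[OF minkowski_mset_length[OF M N] P])
  moreover have "res_prod n F (res_prod n G K) = lin_prod n (minkowski_mset M (minkowski_mset N P))"
    unfolding F_eq G_eq K_eq res_prod_lin_prod[OF N P] by (rule res_prod_lin_prod[OF M minkowski_mset_length[OF N P]])
  ultimately show "res_prod n (res_prod n F G) K = res_prod n F (res_prod n G K)"
    by (simp only: minkowski_mset_assoc)
  have "res_prod n (lin_prod n {#replicate n 0#}) F = lin_prod n (minkowski_mset {#replicate n 0#} M)"
    unfolding F_eq by (rule res_prod_lin_prod) (simp_all add: M)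
  then show "res_prod n (\<lambda>z. z 0) F = F"
    by (simp only: lin_prod_zero_weight minkowski_mset_zero_left[OF M] F_eq)
  show "res_prod n F G = res_prod n G F"
    unfolding F_eq G_eq res_prod_lin_prod[OF M N] res_prod_lin_prod[OF N M] by (simp only: minkowski_mset_commute)
qed (fact one)

section \<open>Kronecker sums and weights\<close>

lemma pair_index_less:
  assumes "a < d" and "b < (e::nat)"
  shows "a * e + b < d * e"
proof -
  have "a * e + b < (a + 1) * e"
    using assms(2) by simp
  also have "\<dots> \<le> d * e"
    using assms(1) by (intro mult_right_mono) simp_all
  finally show ?thesis .
qed

lemma pair_index_div_mod_less:
  assumes "p < d * (e::nat)"
  shows "p div e < d" and "p mod e < e"
proof -
  have "e > 0"
    using assms by (cases e) simp_all
  then show "p div e < d" and "p mod e < e"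
    using assms by (simp_all add: less_mult_imp_div_less)
qed

lemma bij_betw_pair_index: "bij_betw (\<lambda>(a, b). a * e + b) ({..<d} \<times> {..<e}) {..<d * (e::nat)}"
  by (rule bij_betwI[where g = "\<lambda>q. (q div e, q mod e)"])
    (auto simp: pair_index_less pair_index_div_mod_less)

lemma prod_pair_index: "(\<Prod>q<d * (e::nat). f q) = (\<Prod>a<d. \<Prod>b<e. (f (a * e + b) :: 'a::comm_monoid_mult))"
  using prod.reindex_bij_betw[OF bij_betw_pair_index[of e d], of f]
  by (simp add: prod.cartesian_product split_def)

lemma sum_pair_index: "(\<Sum>q<d * (e::nat). f q) = (\<Sum>a<d. \<Sum>b<e. (f (a * e + b) :: 'a::comm_monoid_add))"
  using sum.reindex_bij_betw[OF bij_betw_pair_index[of e d], of f]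
  by (simp add: sum.cartesian_product split_def)

definition kronecker_prod :: "'a::comm_ring_1 mat \<Rightarrow> 'a mat \<Rightarrow> 'a mat" where
  "kronecker_prod X Y = mat (dim_row X * dim_row Y) (dim_col X * dim_col Y)
     (\<lambda>(p, q). X $$ (p div dim_row Y, q div dim_col Y) * Y $$ (p mod dim_row Y, q mod dim_col Y))"

lemma kronecker_prod_carrier [simp]:
  "kronecker_prod X Y \<in> carrier_mat (dim_row X * dim_row Y) (dim_col X * dim_col Y)"
  by (simp add: kronecker_prod_def)

lemma dim_kronecker_prod [simp]:
  "dim_row (kronecker_prod X Y) = dim_row X * dim_row Y"
  "dim_col (kronecker_prod X Y) = dim_col X * dim_col Y"
  by (simp_all add: kronecker_prod_def)

lemma kronecker_prod_carrier_mat: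
  assumes "X \<in> carrier_mat d d'" and "Y \<in> carrier_mat e e'"
  shows "kronecker_prod X Y \<in> carrier_mat (d * e) (d' * e')"
  using assms kronecker_prod_carrier[of X Y] by (metis carrier_matD)

lemma index_kronecker_prod:
  assumes "X \<in> carrier_mat d d'" "Y \<in> carrier_mat e e'" "p < d * e" "q < d' * e'"
  shows "kronecker_prod X Y $$ (p, q) = X $$ (p div e, q div e') * Y $$ (p mod e, q mod e')"
  using assms by (simp add: kronecker_prod_def)

lemma kronecker_prod_mult:
  assumes X: "X \<in> carrier_mat d d'" "X' \<in> carrier_mat d' d''"
    and Y: "Y \<in> carrier_mat e e'" "Y' \<in> carrier_mat e' e''"
  shows "kronecker_prod X Y * kronecker_prod X' Y' = kronecker_prod (X * X') (Y * Y')"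
proof (rule eq_matI)
  fix p r assume "p < dim_row (kronecker_prod (X * X') (Y * Y'))" "r < dim_col (kronecker_prod (X * X') (Y * Y'))"
  then have p: "p < d * e" and r: "r < d'' * e''"
    using X Y by simp_all
  note p_div_mod = pair_index_div_mod_less[OF p] and r_div_mod = pair_index_div_mod_less[OF r]
  have entry: "kronecker_prod X Y $$ (p, a * e' + b) * kronecker_prod X' Y' $$ (a * e' + b, r)
      = (X $$ (p div e, a) * X' $$ (a, r div e'')) * (Y $$ (p mod e, b) * Y' $$ (b, r mod e''))"
    if "a < d'" "b < e'" for a b
  proof -
    have "(a * e' + b) div e' = a" "(a * e' + b) mod e' = b"
      using that by auto
    with that show ?thesis
      using X Y p r pair_index_less[OF that]
      by (simp add: index_kronecker_prod ac_simps)
  qed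
  have "(kronecker_prod X Y * kronecker_prod X' Y') $$ (p, r)
      = (\<Sum>q<d' * e'. kronecker_prod X Y $$ (p, q) * kronecker_prod X' Y' $$ (q, r))"
    using X Y p r by (simp add: scalar_prod_def atLeast0LessThan)
  also have "\<dots> = (\<Sum>a<d'. \<Sum>b<e'. (X $$ (p div e, a) * X' $$ (a, r div e''))
      * (Y $$ (p mod e, b) * Y' $$ (b, r mod e'')))"
    by (simp add: sum_pair_index entry)
  also have "\<dots> = (X * X') $$ (p div e, r div e'') * (Y * Y') $$ (p mod e, r mod e'')"
    using X Y p_div_mod r_div_mod by (simp add: sum_product scalar_prod_def atLeast0LessThan)
  also have "\<dots> = kronecker_prod (X * X') (Y * Y') $$ (p, r)"
    using index_kronecker_prod[OF mult_carrier_mat[OF X] mult_carrier_mat[OF Y] p r] by simp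
  finally show "(kronecker_prod X Y * kronecker_prod X' Y') $$ (p, r) = kronecker_prod (X * X') (Y * Y') $$ (p, r)" .
qed (use X Y in simp_all)

definition kronecker_sum :: "'a::comm_ring_1 mat \<Rightarrow> 'a mat \<Rightarrow> 'a mat" where
  "kronecker_sum A B = kronecker_prod A (1\<^sub>m (dim_row B)) + kronecker_prod (1\<^sub>m (dim_row A)) B"

lemma dim_kronecker_sum [simp]:
  "dim_row (kronecker_sum A B) = dim_row A * dim_row B"
  "dim_col (kronecker_sum A B) = dim_row A * dim_col B"
  by (simp_all add: kronecker_sum_def)

lemma kronecker_sum_carrier [simp]:
  assumes "A \<in> carrier_mat d d" and "B \<in> carrier_mat e e"
  shows "kronecker_sum A B \<in> carrier_mat (d * e) (d * e)"
  using assms unfolding kronecker_sum_def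
  by (intro add_carrier_mat kronecker_prod_carrier_mat) auto

lemma index_kronecker_sum:
  assumes "A \<in> carrier_mat d d" and "B \<in> carrier_mat e e" and "p < d * e" and "q < d * e"
  shows "kronecker_sum A B $$ (p, q) = A $$ (p div e, q div e) * (if p mod e = q mod e then 1 else 0)
     + (if p div e = q div e then 1 else 0) * B $$ (p mod e, q mod e)"
  using assms pair_index_div_mod_less[OF assms(3)] pair_index_div_mod_less[OF assms(4)]
  by (simp add: kronecker_sum_def index_kronecker_prod[of _ d d _ e e])

lemma kronecker_sum_mult:
  assumes A: "A \<in> carrier_mat d d" "A' \<in> carrier_mat d d" and B: "B \<in> carrier_mat e e" "B' \<in> carrier_mat e e"
  shows "kronecker_sum A B * kronecker_sum A' B'
    = kronecker_prod (A * A') (1\<^sub>m e) + kronecker_prod A B' + (kronecker_prod A' B + kronecker_prod (1\<^sub>m d) (B * B'))"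
proof -
  let ?K = "\<lambda>X Y. kronecker_prod X Y"
  have car: "?K A (1\<^sub>m e) \<in> carrier_mat (d * e) (d * e)" "?K (1\<^sub>m d) B \<in> carrier_mat (d * e) (d * e)"
    "?K A' (1\<^sub>m e) \<in> carrier_mat (d * e) (d * e)" "?K (1\<^sub>m d) B' \<in> carrier_mat (d * e) (d * e)"
    using A B by (auto intro: kronecker_prod_carrier_mat)
  have "kronecker_sum A B * kronecker_sum A' B'
      = (?K A (1\<^sub>m e) + ?K (1\<^sub>m d) B) * (?K A' (1\<^sub>m e) + ?K (1\<^sub>m d) B')"
    using A B by (simp add: kronecker_sum_def)
  also have "\<dots> = ?K A (1\<^sub>m e) * (?K A' (1\<^sub>m e) + ?K (1\<^sub>m d) B') + ?K (1\<^sub>m d) B * (?K A' (1\<^sub>m e) + ?K (1\<^sub>m d) B')"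
    by (rule add_mult_distrib_mat[OF car(1,2) add_carrier_mat[OF car(4)]])
  also have "\<dots> = ?K A (1\<^sub>m e) * ?K A' (1\<^sub>m e) + ?K A (1\<^sub>m e) * ?K (1\<^sub>m d) B'
        + (?K (1\<^sub>m d) B * ?K A' (1\<^sub>m e) + ?K (1\<^sub>m d) B * ?K (1\<^sub>m d) B')"
    using car by (simp add: mult_add_distrib_mat)
  also have "\<dots> = ?K (A * A') (1\<^sub>m e) + ?K A B' + (?K A' B + ?K (1\<^sub>m d) (B * B'))"
    using A B by (simp add: kronecker_prod_mult[of _ d d _ d _ e e _ e])
  finally show ?thesis .
qed

lemma kronecker_sum_commutator:
  assumes A: "A \<in> carrier_mat d d" "A' \<in> carrier_mat d d" and B: "B \<in> carrier_mat e e" "B' \<in> carrier_mat e e"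
  shows "kronecker_sum (A * A' - A' * A) (B * B' - B' * B)
    = kronecker_sum A B * kronecker_sum A' B' - kronecker_sum A' B' * kronecker_sum A B"
proof -
  have commutator_carrier: "A * A' - A' * A \<in> carrier_mat d d" "B * B' - B' * B \<in> carrier_mat e e"
    using A B by auto
  note car = kronecker_sum_carrier[OF A(1) B(1)] kronecker_sum_carrier[OF A(2) B(2)]
    kronecker_sum_carrier[OF commutator_carrier]
  show ?thesis
  proof (rule eq_matI)
    fix p q assume "p < dim_row (kronecker_sum A B * kronecker_sum A' B' - kronecker_sum A' B' * kronecker_sum A B)"
      and "q < dim_col (kronecker_sum A B * kronecker_sum A' B' - kronecker_sum A' B' * kronecker_sum A B)"
    then have p: "p < d * e" and q: "q < d * e"
      using A B by (simp_all add: carrier_matD)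
    note bounds = pair_index_div_mod_less[OF p] pair_index_div_mod_less[OF q]
    show "kronecker_sum (A * A' - A' * A) (B * B' - B' * B) $$ (p, q)
      = (kronecker_sum A B * kronecker_sum A' B' - kronecker_sum A' B' * kronecker_sum A B) $$ (p, q)"
      using A B p q bounds car
      by (simp add: index_kronecker_sum[OF commutator_carrier p q] kronecker_sum_mult
          index_kronecker_prod[of _ d d _ e e] algebra_simps)
  qed (use A B in \<open>simp_all add: carrier_matD\<close>)
qed

lemma kronecker_sum_add:
  assumes A: "A \<in> carrier_mat d d" "A' \<in> carrier_mat d d" and B: "B \<in> carrier_mat e e" "B' \<in> carrier_mat e e"
  shows "kronecker_sum (A + A') (B + B') = kronecker_sum A B + kronecker_sum A' B'"
proof -
  note car = kronecker_sum_carrier[OF A(1) B(1)] kronecker_sum_carrier[OF A(2) B(2)]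
    kronecker_sum_carrier[OF add_carrier_mat[OF A(2)] add_carrier_mat[OF B(2)], of A B]
  show ?thesis
  proof (rule eq_matI)
    fix p q assume "p < dim_row (kronecker_sum A B + kronecker_sum A' B')" "q < dim_col (kronecker_sum A B + kronecker_sum A' B')"
    then have p: "p < d * e" and q: "q < d * e"
      using A B by (simp_all add: carrier_matD)
    show "kronecker_sum (A + A') (B + B') $$ (p, q) = (kronecker_sum A B + kronecker_sum A' B') $$ (p, q)"
      using A B p q car pair_index_div_mod_less[OF p] pair_index_div_mod_less[OF q]
      by (simp add: index_kronecker_sum[of _ d _ e] carrier_matD algebra_simps)
  qed (use A B in \<open>simp_all add: carrier_matD\<close>)
qed

lemma kronecker_sum_smult:
  assumes A: "A \<in> carrier_mat d d" and B: "B \<in> carrier_mat e e"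
  shows "kronecker_sum (c \<cdot>\<^sub>m A) (c \<cdot>\<^sub>m B) = c \<cdot>\<^sub>m kronecker_sum A B"
proof -
  note car = kronecker_sum_carrier[OF A B] kronecker_sum_carrier[OF smult_carrier_mat[OF A] smult_carrier_mat[OF B]]
  show ?thesis
  proof (rule eq_matI)
    fix p q assume "p < dim_row (c \<cdot>\<^sub>m kronecker_sum A B)" "q < dim_col (c \<cdot>\<^sub>m kronecker_sum A B)"
    then have p: "p < d * e" and q: "q < d * e"
      using A B by (simp_all add: carrier_matD)
    show "kronecker_sum (c \<cdot>\<^sub>m A) (c \<cdot>\<^sub>m B) $$ (p, q) = (c \<cdot>\<^sub>m kronecker_sum A B) $$ (p, q)"
      using A B p q car pair_index_div_mod_less[OF p] pair_index_div_mod_less[OF q]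
      by (simp add: index_kronecker_sum[of _ d _ e] carrier_matD algebra_simps)
  qed (use A B in \<open>simp_all add: carrier_matD\<close>)
qed

lemma upper_triangular_kronecker_sum:
  assumes A: "A \<in> carrier_mat d d" "upper_triangular A" and B: "B \<in> carrier_mat e e" "upper_triangular B"
  shows "upper_triangular (kronecker_sum A B)"
  unfolding upper_triangular_def
proof (intro allI impI)
  fix p q assume "p < dim_row (kronecker_sum A B)" and "q < p"
  then have p: "p < d * e"
    using A(1) B(1) by (simp add: carrier_matD)
  with \<open>q < p\<close> have q: "q < d * e"
    by simp
  note bounds = pair_index_div_mod_less[OF p] pair_index_div_mod_less[OF q]
  have "q div e \<le> p div e"
    using \<open>q < p\<close> by (simp add: div_le_mono)
  moreover have "q mod e < p mod e" if "p div e = q div e"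
    using \<open>q < p\<close> that by (metis add_less_cancel_left div_mult_mod_eq linorder_neqE_nat not_less_iff_gr_or_eq)
  ultimately show "kronecker_sum A B $$ (p, q) = 0"
    using A B bounds unfolding upper_triangular_def
    by (auto simp: index_kronecker_sum[OF A(1) B(1) p q])
qed

text \<open>The Kronecker sum realizes the tensor product of representations.\<close>
lemma lie_rep_kronecker_sum:
  assumes \<phi>: "lie_rep sc br d \<phi>" and \<psi>: "lie_rep sc br e \<psi>"
  shows "lie_rep sc br (d * e) (\<lambda>x. kronecker_sum (\<phi> x) (\<psi> x))"
proof -
  have c\<phi>: "\<And>x. \<phi> x \<in> carrier_mat d d" and c\<psi>: "\<And>x. \<psi> x \<in> carrier_mat e e"
    using \<phi> \<psi> unfolding lie_rep_def by blast+
  then show ?thesis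
    using \<phi> \<psi> unfolding lie_rep_def
    by (simp add: kronecker_sum_add[OF c\<phi> c\<phi> c\<psi> c\<psi>] kronecker_sum_smult[OF c\<phi> c\<psi>]
        kronecker_sum_commutator[OF c\<phi> c\<phi> c\<psi> c\<psi>])
qed

text \<open>For upper triangular \<open>\<phi>(h\<^sub>i)\<close>, this is the multiset of weights \<open>\<lambda>\<close> of \<open>\<phi>\<close>
  with multiplicities \<open>d\<^sub>\<lambda>\<close>, read off the diagonals.\<close>
definition diag_weights :: "'g list \<Rightarrow> nat \<Rightarrow> ('g \<Rightarrow> complex mat) \<Rightarrow> complex list multiset" where
  "diag_weights hs d \<phi> = image_mset (\<lambda>a. map (\<lambda>i. \<phi> (hs ! i) $$ (a, a)) [0..<length hs]) (mset_set {..<d})"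

lemma diag_weights_length: "\<forall>c\<in>#diag_weights hs d \<phi>. length c = length hs"
  by (simp add: diag_weights_def)

lemma lin_prod_diag_weights:
  "lin_prod (length hs) (diag_weights hs d \<phi>) z
     = (\<Prod>a<d. z 0 + (\<Sum>i<length hs. \<phi> (hs ! i) $$ (a, a) * z (Suc i)))"
  by (simp add: lin_prod_def diag_weights_def multiset.map_comp o_def prod_unfold_prod_mset)

lemma prod_list_map_upt: "prod_list (map f [0..<n]) = (\<Prod>a<n. f a)"
  by (simp add: prod.distinct_set_conv_list[symmetric] atLeast0LessThan)

lemma char_poly_fun_upper_triangular:
  assumes car: "\<forall>i<length hs. \<phi> (hs ! i) \<in> carrier_mat d d"
    and triangular: "\<forall>i<length hs. upper_triangular (\<phi> (hs ! i))"
  shows "char_poly_fun hs d \<phi> = lin_prod (length hs) (diag_weights hs d \<phi>)"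
proof
  fix z
  define X where "X = mat d d (\<lambda>(a, b).
      z 0 * (if a = b then 1 else 0) + (\<Sum>i<length hs. z (Suc i) * (\<phi> (hs ! i) $$ (a, b))))"
  have X: "X \<in> carrier_mat d d"
    by (simp add: X_def)
  have "upper_triangular X"
    unfolding upper_triangular_def
  proof (intro allI impI)
    fix a b assume "a < dim_row X" and "b < a"
    then have "\<phi> (hs ! i) $$ (a, b) = 0" if "i < length hs" for i
      using car triangular that X unfolding upper_triangular_def by fastforce
    with \<open>a < dim_row X\<close> \<open>b < a\<close> show "X $$ (a, b) = 0"
      using X by (simp add: X_def)
  qed
  then have "det X = prod_list (diag_mat X)"
    by (rule det_upper_triangular[OF _ X])
  also have "\<dots> = (\<Prod>a<d. z 0 + (\<Sum>i<length hs. \<phi> (hs ! i) $$ (a, a) * z (Suc i)))"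
    using X by (simp add: diag_mat_def prod_list_map_upt X_def mult.commute)
  also have "\<dots> = lin_prod (length hs) (diag_weights hs d \<phi>) z"
    by (rule lin_prod_diag_weights[symmetric])
  finally show "char_poly_fun hs d \<phi> z = lin_prod (length hs) (diag_weights hs d \<phi>) z"
    by (simp only: char_poly_fun_def X_def)
qed

lemma lin_prod_diag_weights_kronecker_sum:
  assumes c\<phi>: "\<forall>i<length hs. \<phi> (hs ! i) \<in> carrier_mat d d" and c\<psi>: "\<forall>i<length hs. \<psi> (hs ! i) \<in> carrier_mat e e"
  shows "lin_prod (length hs) (diag_weights hs (d * e) (\<lambda>x. kronecker_sum (\<phi> x) (\<psi> x)))
       = lin_prod (length hs) (minkowski_mset (diag_weights hs d \<phi>) (diag_weights hs e \<psi>))"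
proof
  fix z
  let ?n = "length hs"
  have diag: "kronecker_sum (\<phi> (hs ! i)) (\<psi> (hs ! i)) $$ (a * e + b, a * e + b)
      = \<phi> (hs ! i) $$ (a, a) + \<psi> (hs ! i) $$ (b, b)" if "a < d" "b < e" "i < ?n" for a b i
  proof -
    have "(a * e + b) div e = a" "(a * e + b) mod e = b"
      using that by auto
    then show ?thesis
      using index_kronecker_sum[of "\<phi> (hs ! i)" d "\<psi> (hs ! i)" e] c\<phi> c\<psi> that pair_index_less[OF that(1,2)] by simp
  qed
  have "lin_prod ?n (diag_weights hs (d * e) (\<lambda>x. kronecker_sum (\<phi> x) (\<psi> x))) z
     = (\<Prod>a<d. \<Prod>b<e. z 0 + (\<Sum>i<?n. kronecker_sum (\<phi> (hs ! i)) (\<psi> (hs ! i)) $$ (a * e + b, a * e + b) * z (Suc i)))"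
    by (simp add: lin_prod_diag_weights prod_pair_index)
  also have "\<dots> = (\<Prod>a<d. \<Prod>b<e. z 0 + (\<Sum>i<?n. (\<phi> (hs ! i) $$ (a, a) + \<psi> (hs ! i) $$ (b, b)) * z (Suc i)))"
    by (simp add: diag)
  also have "\<dots> = lin_prod ?n (minkowski_mset (diag_weights hs d \<phi>) (diag_weights hs e \<psi>)) z"
    unfolding lin_prod_minkowski_mset diag_weights_def multiset.map_comp o_def prod_unfold_prod_mset[symmetric]
    by (intro prod.cong sum.cong refl arg_cong2[where f = "(+)"]) (simp add: algebra_simps)
  finally show "lin_prod ?n (diag_weights hs (d * e) (\<lambda>x. kronecker_sum (\<phi> x) (\<psi> x))) z
      = lin_prod ?n (minkowski_mset (diag_weights hs d \<phi>) (diag_weights hs e \<psi>)) z" .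
qed

section \<open>Simultaneous triangularization\<close>

lemma mat_mult_left_cancel:
  fixes K X Y :: "'a::comm_ring_1 mat"
  assumes K: "K \<in> carrier_mat n m" and inj: "\<forall>c\<in>carrier_vec m. K *\<^sub>v c = 0\<^sub>v n \<longrightarrow> c = 0\<^sub>v m"
    and X: "X \<in> carrier_mat m k" and Y: "Y \<in> carrier_mat m k" and eq: "K * X = K * Y"
  shows "X = Y"
proof (rule mat_col_eqI)
  fix j assume "j < dim_col Y"
  then have j: "j < k"
    using Y by simp
  have cols: "col X j \<in> carrier_vec m" "col Y j \<in> carrier_vec m"
    using X Y j by auto
  have "K *\<^sub>v (col X j - col Y j) = K *\<^sub>v col X j - K *\<^sub>v col Y j"
    using K cols by (simp add: mult_minus_distrib_mat_vec)
  also have "\<dots> = 0\<^sub>v n"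
    using col_mult2[OF K X j] col_mult2[OF K Y j] eq mult_mat_vec_carrier[OF K cols(1)] by simp
  finally have "col X j - col Y j = 0\<^sub>v m"
    using inj cols by simp
  then show "col X j = col Y j"
    using cols by (metis (no_types, lifting) carrier_vecD eq_vecI index_minus_vec(1) index_zero_vec(1) right_minus_eq)
qed (use X Y in simp_all)

lemma mat_mult_factor_through:
  fixes K B :: "'a::comm_ring_1 mat"
  assumes K: "K \<in> carrier_mat n m" and B: "B \<in> carrier_mat n k"
    and range: "\<forall>j<k. \<exists>c\<in>carrier_vec m. K *\<^sub>v c = col B j"
  obtains C where "C \<in> carrier_mat m k" and "K * C = B"
proof -
  obtain cf where cf: "\<forall>j\<in>{..<k}. cf j \<in> carrier_vec m \<and> K *\<^sub>v cf j = col B j"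
    using bchoice[of "{..<k}" "\<lambda>j c. c \<in> carrier_vec m \<and> K *\<^sub>v c = col B j"] range by auto
  define C where "C = mat_of_cols m (map cf [0..<k])"
  have C: "C \<in> carrier_mat m k"
    using mat_of_cols_carrier(1)[of m "map cf [0..<k]"] by (simp add: C_def)
  have "K * C = B"
  proof (rule mat_col_eqI)
    fix j assume "j < dim_col B"
    then have j: "j < k"
      using B by simp
    then have "col (K * C) j = K *\<^sub>v col C j"
      by (rule col_mult2[OF K C])
    also have "\<dots> = col B j"
      using cf j by (simp add: C_def)
    finally show "col (K * C) j = col B j" .
  qed (use K B C in simp_all)
  with C show ?thesis
    by (rule that)
qed

lemma kernel_basis_mat:
  fixes N :: "'a::field mat"
  assumes N: "N \<in> carrier_mat n n"
  obtains m K where "K \<in> carrier_mat n m" and "\<forall>c\<in>carrier_vec m. K *\<^sub>v c = 0\<^sub>v n \<longrightarrow> c = 0\<^sub>v m"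
    and "N * K = 0\<^sub>m n m" and "\<forall>v\<in>mat_kernel N. \<exists>c\<in>carrier_vec m. K *\<^sub>v c = v"
proof -
  interpret NC: vec_space "TYPE('a)" n .
  interpret KN: kernel n n N by (unfold_locales) (rule N)
  obtain B where "finite B" and "KN.basis B"
    using kernel_basis_exists[OF N] by blast
  then have B_ker: "B \<subseteq> mat_kernel N" and indep: "\<not> NC.lin_dep B" and span: "NC.span B = mat_kernel N"
    unfolding KN.Ker.basis_def using KN.lindep_same KN.span_same by auto
  have B: "B \<subseteq> carrier_vec n"
    using B_ker N unfolding mat_kernel_def by auto
  obtain ks where ks: "set ks = B" "distinct ks"
    using finite_distinct_list[OF \<open>finite B\<close>] by blast
  define K where "K = mat_of_cols n ks"
  have K: "K \<in> carrier_mat n (length ks)" and cols: "cols K = ks"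
    using B ks by (auto simp: K_def)
  have inj: "c = 0\<^sub>v (length ks)" if "c \<in> carrier_vec (length ks)" "K *\<^sub>v c = 0\<^sub>v n" for c
    using NC.lin_depI[OF K that(1) _ that(2)] indep ks cols by auto
  have NK: "N * K = 0\<^sub>m n (length ks)"
  proof (rule mat_col_eqI)
    fix j assume "j < dim_col (0\<^sub>m n (length ks))"
    then have j: "j < length ks"
      by simp
    have "ks ! j \<in> B"
      using ks(1) j by auto
    then have "col K j \<in> mat_kernel N"
      using B_ker B j unfolding K_def by (subst col_mat_of_cols) auto
    then have "N *\<^sub>v col K j = 0\<^sub>v n"
      by (rule mat_kernelD(2)[OF N])
    then show "col (N * K) j = col (0\<^sub>m n (length ks)) j"
      using col_mult2[OF N K j] j by simp
  qed (use N K in auto)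
  have span_K: "\<exists>c\<in>carrier_vec (length ks). K *\<^sub>v c = v" if v: "v \<in> mat_kernel N" for v
  proof -
    have "v \<in> NC.span B"
      using v span by simp
    then obtain a where "NC.lincomb a B = v"
      using NC.finite_in_span[OF \<open>finite B\<close> B] by blast
    then show ?thesis
      using NC.mat_mult_eq_lincomb[OF K] ks cols by (intro bexI[of _ "vec (length ks) (\<lambda>i. a (col K i))"]) auto
  qed
  show ?thesis
    by (rule that[OF K]) (use inj NK span_K in auto)
qed

lemma mat_kernel_char_matrix:
  fixes C :: "'a::field mat"
  assumes C: "C \<in> carrier_mat m m"
  shows "v \<in> mat_kernel (char_matrix C e) \<longleftrightarrow> v \<in> carrier_vec m \<and> C *\<^sub>v v = e \<cdot>\<^sub>v v"
proof (cases "v = 0\<^sub>v m")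
  case True
  have N: "char_matrix C e \<in> carrier_mat m m"
    using C by simp
  then have "char_matrix C e *\<^sub>v 0\<^sub>v m = 0\<^sub>v m"
    by auto
  with True N C show ?thesis
    by (auto simp: mat_kernel[OF N])
next
  case False
  have "v \<in> mat_kernel (char_matrix C e) \<longleftrightarrow> v \<in> carrier_vec m \<and> char_matrix C e *\<^sub>v v = 0\<^sub>v m"
    using C by (simp add: mat_kernel[OF char_matrix_closed[OF C]])
  also have "\<dots> \<longleftrightarrow> eigenvector C v e"
    using False unfolding eigenvector_char_matrix[OF C] by auto
  also have "\<dots> \<longleftrightarrow> v \<in> carrier_vec m \<and> C *\<^sub>v v = e \<cdot>\<^sub>v v"
    using False C unfolding eigenvector_def by auto
  finally show ?thesis .
qed

lemma eigenspace_basis_mat: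
  fixes C :: "'a::field mat"
  assumes C: "C \<in> carrier_mat m m" and "e \<in> spectrum C"
  obtains k K where "K \<in> carrier_mat m k" and "0 < k" and "\<forall>c\<in>carrier_vec k. K *\<^sub>v c = 0\<^sub>v m \<longrightarrow> c = 0\<^sub>v k"
    and "\<forall>c\<in>carrier_vec k. C *\<^sub>v (K *\<^sub>v c) = e \<cdot>\<^sub>v (K *\<^sub>v c)"
    and "\<forall>v\<in>carrier_vec m. C *\<^sub>v v = e \<cdot>\<^sub>v v \<longrightarrow> (\<exists>c\<in>carrier_vec k. K *\<^sub>v c = v)"
proof -
  have N: "char_matrix C e \<in> carrier_mat m m"
    using C by simp
  obtain k K where K: "K \<in> carrier_mat m k" and inj: "\<forall>c\<in>carrier_vec k. K *\<^sub>v c = 0\<^sub>v m \<longrightarrow> c = 0\<^sub>v k"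
    and NK: "char_matrix C e * K = 0\<^sub>m m k"
    and surj: "\<forall>v\<in>mat_kernel (char_matrix C e). \<exists>c\<in>carrier_vec k. K *\<^sub>v c = v"
    by (rule kernel_basis_mat[OF N])
  have kernel: "K *\<^sub>v c \<in> mat_kernel (char_matrix C e)" if "c \<in> carrier_vec k" for c
  proof (rule mat_kernelI[OF N])
    have "char_matrix C e *\<^sub>v (K *\<^sub>v c) = (char_matrix C e * K) *\<^sub>v c"
      using N K that by simp
    also have "\<dots> = 0\<^sub>v m"
      unfolding NK by (rule eq_vecI) (use that in \<open>auto simp: mult_mat_vec_def scalar_prod_def\<close>)
    finally show "char_matrix C e *\<^sub>v (K *\<^sub>v c) = 0\<^sub>v m" .
  qed (use K that in simp)
  have "\<forall>c\<in>carrier_vec k. C *\<^sub>v (K *\<^sub>v c) = e \<cdot>\<^sub>v (K *\<^sub>v c)"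
    using kernel by (simp add: mat_kernel_char_matrix[OF C])
  moreover have span: "\<forall>v\<in>carrier_vec m. C *\<^sub>v v = e \<cdot>\<^sub>v v \<longrightarrow> (\<exists>c\<in>carrier_vec k. K *\<^sub>v c = v)"
    using surj by (simp add: mat_kernel_char_matrix[OF C])
  moreover have "0 < k"
  proof (rule ccontr)
    obtain w where w: "w \<in> carrier_vec m" "w \<noteq> 0\<^sub>v m" "C *\<^sub>v w = e \<cdot>\<^sub>v w"
      using \<open>e \<in> spectrum C\<close> C unfolding spectrum_def eigenvalue_def eigenvector_def by auto
    assume "\<not> 0 < k"
    then obtain c where c: "c \<in> carrier_vec 0" and "K *\<^sub>v c = w"
      using span w by auto
    moreover have "K *\<^sub>v c = 0\<^sub>v m"
      using K c by (intro eq_vecI) (auto simp: scalar_prod_def)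
    ultimately show False
      using w(2) by simp
  qed
  ultimately show ?thesis
    using that[OF K _ inj] by blast
qed

lemma eigenspace_invariant:
  fixes C C' E :: "'a::field mat"
  assumes C: "C \<in> carrier_mat m m" and C': "C' \<in> carrier_mat m m" and CC': "C * C' = C' * C"
    and E: "E \<in> carrier_mat m k" and eigen: "\<forall>c\<in>carrier_vec k. C *\<^sub>v (E *\<^sub>v c) = e \<cdot>\<^sub>v (E *\<^sub>v c)"
    and span: "\<forall>v\<in>carrier_vec m. C *\<^sub>v v = e \<cdot>\<^sub>v v \<longrightarrow> (\<exists>c\<in>carrier_vec k. E *\<^sub>v c = v)"
  obtains D where "D \<in> carrier_mat k k" and "E * D = C' * E"
proof (rule mat_mult_factor_through[OF E mult_carrier_mat[OF C' E]], intro allI impI)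
  fix j assume "j < k"
  have "E *\<^sub>v unit_vec k j = col E j"
    using E \<open>j < k\<close> by (intro eq_vecI) auto
  then have col: "col (C' * E) j = C' *\<^sub>v (E *\<^sub>v unit_vec k j)"
    using col_mult2[OF C' E \<open>j < k\<close>] by simp
  have "C *\<^sub>v col (C' * E) j = (C * C') *\<^sub>v (E *\<^sub>v unit_vec k j)"
    using C C' E by (simp add: col)
  also have "\<dots> = C' *\<^sub>v (C *\<^sub>v (E *\<^sub>v unit_vec k j))"
    using C C' E unfolding CC' by simp
  also have "\<dots> = e \<cdot>\<^sub>v col (C' * E) j"
    using eigen C' E by (simp add: col mult_mat_vec)
  finally show "\<exists>c\<in>carrier_vec k. E *\<^sub>v c = col (C' * E) j"
    using span C' E \<open>j < k\<close> by simp
qed (rule that)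

lemma mat_restrictions_commute:
  fixes K A B C D :: "'a::comm_ring_1 mat"
  assumes K: "K \<in> carrier_mat n m" and inj: "\<forall>c\<in>carrier_vec m. K *\<^sub>v c = 0\<^sub>v n \<longrightarrow> c = 0\<^sub>v m"
    and A: "A \<in> carrier_mat n n" and B: "B \<in> carrier_mat n n" and AB: "A * B = B * A"
    and C: "C \<in> carrier_mat m m" "K * C = A * K" and D: "D \<in> carrier_mat m m" "K * D = B * K"
  shows "C * D = D * C"
proof (rule mat_mult_left_cancel[OF K inj])
  have "K * (C * D) = (K * C) * D"
    using K C(1) D(1) by simp
  also have "\<dots> = A * (K * D)"
    using K A D(1) unfolding C(2) by simp
  also have "\<dots> = (A * B) * K"
    using K A B unfolding D(2) by simp
  also have "\<dots> = B * (K * C)"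
    using K A B unfolding AB C(2) by simp
  also have "\<dots> = (B * K) * C"
    using K B C(1) by simp
  also have "\<dots> = K * (D * C)"
    using K C(1) D(1) unfolding D(2)[symmetric] by simp
  finally show "K * (C * D) = K * (D * C)" .
qed (use C D in auto)

text \<open>Induction over the family: the eigenspace of the first matrix, restricted to the current
  invariant subspace (the range of \<open>K\<close>), is invariant under the remaining matrices since they
  commute with the first one.\<close>
lemma common_eigenvector_in_range:
  fixes As :: "complex mat list"
  assumes K: "K \<in> carrier_mat n m" "0 < m" and inj: "\<forall>c\<in>carrier_vec m. K *\<^sub>v c = 0\<^sub>v n \<longrightarrow> c = 0\<^sub>v m"
    and car: "\<forall>A\<in>set As. A \<in> carrier_mat n n" and comm: "\<forall>A\<in>set As. \<forall>B\<in>set As. A * B = B * A"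
    and inv: "\<forall>A\<in>set As. \<exists>C\<in>carrier_mat m m. K * C = A * K"
  shows "\<exists>c\<in>carrier_vec m. K *\<^sub>v c \<noteq> 0\<^sub>v n \<and> (\<forall>A\<in>set As. \<exists>e. A *\<^sub>v (K *\<^sub>v c) = e \<cdot>\<^sub>v (K *\<^sub>v c))"
  using assms
proof (induction As arbitrary: m K)
  case Nil
  have "unit_vec m 0 \<noteq> 0\<^sub>v m"
    using Nil.prems(2) by simp
  then have "K *\<^sub>v unit_vec m 0 \<noteq> 0\<^sub>v n"
    using Nil.prems(3) unit_vec_carrier by blast
  then show ?case
    using unit_vec_carrier by auto
next
  case (Cons A As)
  note K = Cons.prems(1) and inj = Cons.prems(3)
  have Ac: "A \<in> carrier_mat n n"
    using Cons.prems(4) by simp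
  obtain C where C: "C \<in> carrier_mat m m" and KC: "K * C = A * K"
    using Cons.prems(6) by auto
  obtain e where "e \<in> spectrum C"
    using spectrum_non_empty[OF C Cons.prems(2)] by blast
  then obtain k E where E: "E \<in> carrier_mat m k" and "0 < k" and inj_E: "\<forall>c\<in>carrier_vec k. E *\<^sub>v c = 0\<^sub>v m \<longrightarrow> c = 0\<^sub>v k"
    and eigen: "\<forall>c\<in>carrier_vec k. C *\<^sub>v (E *\<^sub>v c) = e \<cdot>\<^sub>v (E *\<^sub>v c)"
    and span: "\<forall>v\<in>carrier_vec m. C *\<^sub>v v = e \<cdot>\<^sub>v v \<longrightarrow> (\<exists>c\<in>carrier_vec k. E *\<^sub>v c = v)"
    by (rule eigenspace_basis_mat[OF C])
  have KE: "K * E \<in> carrier_mat n k"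
    using K E by simp
  have inj_KE: "\<forall>c\<in>carrier_vec k. (K * E) *\<^sub>v c = 0\<^sub>v n \<longrightarrow> c = 0\<^sub>v k"
    using inj inj_E K E by (simp add: assoc_mult_mat_vec)
  have "\<exists>D\<in>carrier_mat k k. (K * E) * D = B * (K * E)" if B: "B \<in> set As" for B
  proof -
    have Bc: "B \<in> carrier_mat n n"
      using Cons.prems(4) B by auto
    obtain C' where C': "C' \<in> carrier_mat m m" and KC': "K * C' = B * K"
      using Cons.prems(6) B by auto
    have CC': "C * C' = C' * C"
      using mat_restrictions_commute[OF K inj Ac Bc _ C KC C' KC'] Cons.prems(5) B by simp
    obtain D where D: "D \<in> carrier_mat k k" and ED: "E * D = C' * E"
      by (rule eigenspace_invariant[OF C C' CC' E eigen span])
    have "(K * E) * D = K * (C' * E)"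
      using K E D by (simp add: ED[symmetric])
    also have "\<dots> = B * (K * E)"
      using K E C' Bc unfolding assoc_mult_mat[OF K C' E, symmetric] KC' by simp
    finally show ?thesis
      using D by blast
  qed
  then obtain c where c: "c \<in> carrier_vec k" and nonzero: "(K * E) *\<^sub>v c \<noteq> 0\<^sub>v n"
    and common: "\<forall>B\<in>set As. \<exists>e. B *\<^sub>v ((K * E) *\<^sub>v c) = e \<cdot>\<^sub>v ((K * E) *\<^sub>v c)"
    using Cons.IH[OF KE \<open>0 < k\<close> inj_KE] Cons.prems(4,5) by auto
  have Ec: "E *\<^sub>v c \<in> carrier_vec m"
    using E c by simp
  have "A *\<^sub>v (K *\<^sub>v (E *\<^sub>v c)) = (A * K) *\<^sub>v (E *\<^sub>v c)"
    using K Ec Ac by simp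
  also have "\<dots> = K *\<^sub>v (C *\<^sub>v (E *\<^sub>v c))"
    using K C Ec unfolding KC[symmetric] by simp
  also have "\<dots> = e \<cdot>\<^sub>v (K *\<^sub>v (E *\<^sub>v c))"
    using eigen c K Ec by (simp add: mult_mat_vec)
  finally show ?case
    using Ec nonzero common K E c by (intro bexI[of _ "E *\<^sub>v c"]) (auto simp: assoc_mult_mat_vec)
qed

lemma common_eigenvector:
  fixes As :: "complex mat list"
  assumes "0 < n" and car: "\<forall>A\<in>set As. A \<in> carrier_mat n n"
    and comm: "\<forall>A\<in>set As. \<forall>B\<in>set As. A * B = B * A"
  obtains v where "v \<in> carrier_vec n" and "v \<noteq> 0\<^sub>v n" and "\<forall>A\<in>set As. \<exists>e. A *\<^sub>v v = e \<cdot>\<^sub>v v"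
proof -
  have "\<forall>A\<in>set As. \<exists>C\<in>carrier_mat n n. 1\<^sub>m n * C = A * 1\<^sub>m n"
    using car by auto
  then have "\<exists>c\<in>carrier_vec n. 1\<^sub>m n *\<^sub>v c \<noteq> 0\<^sub>v n \<and> (\<forall>A\<in>set As. \<exists>e. A *\<^sub>v (1\<^sub>m n *\<^sub>v c) = e \<cdot>\<^sub>v (1\<^sub>m n *\<^sub>v c))"
    by (intro common_eigenvector_in_range[OF _ \<open>0 < n\<close> _ car comm]) auto
  then show ?thesis
    using that by auto
qed

lemma conjugate_mult_mat:
  fixes A B P Q :: "'a::comm_ring_1 mat"
  assumes "A \<in> carrier_mat n n" "B \<in> carrier_mat n n" "P \<in> carrier_mat n n" "Q \<in> carrier_mat n n"
    and "P * Q = 1\<^sub>m n"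
  shows "(Q * A * P) * (Q * B * P) = Q * (A * B) * P"
proof -
  have "(Q * A * P) * (Q * B * P) = Q * A * (P * Q) * B * P"
    using assms(1-4) by (simp add: assoc_mult_mat[of _ n n _ n _ n])
  also have "\<dots> = Q * (A * B) * P"
    using assms by (simp add: assoc_mult_mat[of _ n n _ n _ n] left_mult_one_mat[OF assms(2)])
  finally show ?thesis .
qed

lemma first_column_zero_block_form:
  assumes A: "A \<in> carrier_mat (Suc m) (Suc m)" and zero: "\<And>i. i < m \<Longrightarrow> A $$ (Suc i, 0) = 0"
  obtains A1 A2 A3 where "A1 \<in> carrier_mat 1 1" and "A2 \<in> carrier_mat 1 m" and "A3 \<in> carrier_mat m m"
    and "A = four_block_mat A1 A2 (0\<^sub>m m 1) A3"
proof -
  obtain A1 A2 A0 A3 where split: "split_block A 1 1 = (A1, A2, A0, A3)"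
    by (cases "split_block A 1 1") auto
  have "dim_row A = 1 + m" "dim_col A = 1 + m"
    using A by auto
  from split_block[OF split this] have A1: "A1 \<in> carrier_mat 1 1" and A2: "A2 \<in> carrier_mat 1 m"
    and A3: "A3 \<in> carrier_mat m m" and blocks: "A = four_block_mat A1 A2 A0 A3"
    by auto
  have "A0 = 0\<^sub>m m 1"
    using split[unfolded split_block_def Let_def] A zero by auto
  with A1 A2 A3 blocks show ?thesis
    using that by blast
qed

lemma invertible_mat_first_column:
  fixes v :: "'a::conjugatable_ordered_field vec"
  assumes v: "v \<in> carrier_vec n" "v \<noteq> 0\<^sub>v n"
  obtains W W' where "W \<in> carrier_mat n n" and "W' \<in> carrier_mat n n"
    and "W * W' = 1\<^sub>m n" and "W' * W = 1\<^sub>m n" and "col W 0 = v"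
proof -
  interpret cof_vec_space n "TYPE('a)" .
  define b where "b = basis_completion v"
  define ws where "ws = gram_schmidt n b"
  define W where "W = mat_of_cols n ws"
  define W' where "W' = corthogonal_inv W"
  from basis_completion[OF v, folded b_def]
  have b: "set b \<subseteq> carrier_vec n" and dist_b: "distinct b" and indep: "\<not> lin_dep (set b)"
    and hd_b: "hd b = v" and len_b: "length b = n"
    by auto
  have "n \<noteq> 0"
    using v by auto
  with hd_b len_b obtain vs where bv: "b = v # vs"
    by (cases b) auto
  from gram_schmidt_result[OF b dist_b indep refl, folded ws_def]
  have ws: "set ws \<subseteq> carrier_vec n" "corthogonal ws" "length ws = n"
    by (auto simp: len_b)
  have "hd ws = v"
    using gram_schmidt_hd[OF v(1), of vs] unfolding ws_def bv .
  with ws \<open>n \<noteq> 0\<close> have "col W 0 = v"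
    unfolding W_def by (cases ws) auto
  have W: "W \<in> carrier_mat n n"
    using ws mat_of_cols_carrier(1)[of n ws] unfolding W_def by auto
  have W': "W' \<in> carrier_mat n n"
    using W unfolding W'_def corthogonal_inv_def by (auto simp: mat_of_rows_def)
  have "inverts_mat W' W"
    using corthogonal_inv_result[OF orthogonal_mat_of_cols[OF ws, folded W_def]] unfolding W'_def .
  then have W'W: "W' * W = 1\<^sub>m n"
    using W' unfolding inverts_mat_def by simp
  then have "W * W' = 1\<^sub>m n"
    using mat_mult_left_right_inverse[OF W' W] by simp
  from that[OF W W' this W'W \<open>col W 0 = v\<close>] show ?thesis .
qed

text \<open>If the first column of \<open>W\<close> is an eigenvector of \<open>A\<close>, so is the first unit vector for
  \<open>W\<^sup>-\<^sup>1 A W\<close>.\<close>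
lemma eigenvector_block_form:
  fixes W W' A :: "'a::field mat"
  assumes W: "W \<in> carrier_mat (Suc m) (Suc m)" and W': "W' \<in> carrier_mat (Suc m) (Suc m)"
    and W'W: "W' * W = 1\<^sub>m (Suc m)" and A: "A \<in> carrier_mat (Suc m) (Suc m)"
    and eigen: "A *\<^sub>v col W 0 = e \<cdot>\<^sub>v col W 0"
  obtains A1 A2 A3 where "A1 \<in> carrier_mat 1 1" and "A2 \<in> carrier_mat 1 m" and "A3 \<in> carrier_mat m m"
    and "W' * A * W = four_block_mat A1 A2 (0\<^sub>m m 1) A3"
proof (rule first_column_zero_block_form)
  show A': "W' * A * W \<in> carrier_mat (Suc m) (Suc m)"
    using W W' A by auto
  have col: "col W 0 \<in> carrier_vec (Suc m)"
    using col_carrier_vec[OF zero_less_Suc W] .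
  then have "col (W' * A * W) 0 = W' *\<^sub>v (A *\<^sub>v col W 0)"
    using W W' A col_mult2[OF mult_carrier_mat[OF W' A] W zero_less_Suc] by simp
  also have "\<dots> = e \<cdot>\<^sub>v col (W' * W) 0"
    unfolding eigen col_mult2[OF W' W zero_less_Suc] by (rule mult_mat_vec[OF W' col])
  finally have first_col: "col (W' * A * W) 0 = e \<cdot>\<^sub>v unit_vec (Suc m) 0"
    unfolding W'W by simp
  show "(W' * A * W) $$ (Suc i, 0) = 0" if "i < m" for i
    using arg_cong[OF first_col, of "\<lambda>w. w $ Suc i"] W' that by (simp add: col_def)
qed (rule that)

lemma four_block_lower_right_commute:
  assumes X: "X1 \<in> carrier_mat k k" "X2 \<in> carrier_mat k m" "X3 \<in> carrier_mat m m"
    and Y: "Y1 \<in> carrier_mat k k" "Y2 \<in> carrier_mat k m" "Y3 \<in> carrier_mat m m"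
    and comm: "four_block_mat X1 X2 (0\<^sub>m m k) X3 * four_block_mat Y1 Y2 (0\<^sub>m m k) Y3
      = four_block_mat Y1 Y2 (0\<^sub>m m k) Y3 * four_block_mat X1 X2 (0\<^sub>m m k) X3"
  shows "X3 * Y3 = Y3 * X3"
proof (rule eq_matI)
  fix i j assume "i < dim_row (Y3 * X3)" "j < dim_col (Y3 * X3)"
  then have i: "i < m" and j: "j < m"
    using X Y by simp_all
  have "(X3 * Y3) $$ (i, j) = (four_block_mat X1 X2 (0\<^sub>m m k) X3 * four_block_mat Y1 Y2 (0\<^sub>m m k) Y3) $$ (k + i, k + j)"
    using X Y i j by (simp add: mult_four_block_mat[OF X(1,2) _ X(3) Y(1,2) _ Y(3)])
  also have "\<dots> = (Y3 * X3) $$ (i, j)"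
    using X Y i j by (simp add: comm mult_four_block_mat[OF Y(1,2) _ Y(3) X(1,2) _ X(3)])
  finally show "(X3 * Y3) $$ (i, j) = (Y3 * X3) $$ (i, j)" .
qed (use X Y in simp_all)

lemma four_block_one_mult:
  fixes P Q :: "'a::comm_ring_1 mat"
  assumes "P \<in> carrier_mat m m" and "Q \<in> carrier_mat m m"
  shows "four_block_mat (1\<^sub>m k) (0\<^sub>m k m) (0\<^sub>m m k) P * four_block_mat (1\<^sub>m k) (0\<^sub>m k m) (0\<^sub>m m k) Q
    = four_block_mat (1\<^sub>m k) (0\<^sub>m k m) (0\<^sub>m m k) (P * Q)"
  by (subst mult_four_block_mat[OF one_carrier_mat zero_carrier_mat zero_carrier_mat assms(1)
        one_carrier_mat zero_carrier_mat zero_carrier_mat assms(2)]) (use assms in simp)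

lemma four_block_conjugate:
  fixes A1 A2 A3 P Q :: "'a::comm_ring_1 mat"
  assumes A: "A1 \<in> carrier_mat k k" "A2 \<in> carrier_mat k m" "A3 \<in> carrier_mat m m"
    and P: "P \<in> carrier_mat m m" and Q: "Q \<in> carrier_mat m m"
  shows "four_block_mat (1\<^sub>m k) (0\<^sub>m k m) (0\<^sub>m m k) Q * four_block_mat A1 A2 (0\<^sub>m m k) A3
      * four_block_mat (1\<^sub>m k) (0\<^sub>m k m) (0\<^sub>m m k) P
    = four_block_mat A1 (A2 * P) (0\<^sub>m m k) (Q * A3 * P)"
proof -
  have "four_block_mat (1\<^sub>m k) (0\<^sub>m k m) (0\<^sub>m m k) Q * four_block_mat A1 A2 (0\<^sub>m m k) A3
      = four_block_mat A1 A2 (0\<^sub>m m k) (Q * A3)"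
    by (subst mult_four_block_mat[OF one_carrier_mat zero_carrier_mat zero_carrier_mat Q A(1,2) zero_carrier_mat A(3)])
      (use A Q in simp)
  moreover have "four_block_mat A1 A2 (0\<^sub>m m k) (Q * A3) * four_block_mat (1\<^sub>m k) (0\<^sub>m k m) (0\<^sub>m m k) P
      = four_block_mat A1 (A2 * P) (0\<^sub>m m k) (Q * A3 * P)"
    by (subst mult_four_block_mat[OF A(1,2) zero_carrier_mat mult_carrier_mat[OF Q A(3)]
          one_carrier_mat zero_carrier_mat zero_carrier_mat P]) (use A P Q in simp)
  ultimately show ?thesis
    by simp
qed

lemma commuting_block_form:
  fixes As :: "complex mat list"
  assumes car: "\<forall>A\<in>set As. A \<in> carrier_mat (Suc m) (Suc m)"
    and comm: "\<forall>A\<in>set As. \<forall>B\<in>set As. A * B = B * A"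
  obtains W W' lower where "W \<in> carrier_mat (Suc m) (Suc m)" and "W' \<in> carrier_mat (Suc m) (Suc m)"
    and "W * W' = 1\<^sub>m (Suc m)" and "W' * W = 1\<^sub>m (Suc m)"
    and "\<forall>A\<in>set As. lower A \<in> carrier_mat m m \<and> (\<exists>A1 A2. A1 \<in> carrier_mat 1 1
      \<and> A2 \<in> carrier_mat 1 m \<and> W' * A * W = four_block_mat A1 A2 (0\<^sub>m m 1) (lower A))"
    and "\<forall>A\<in>set As. \<forall>B\<in>set As. lower A * lower B = lower B * lower A"
proof -
  obtain v where v: "v \<in> carrier_vec (Suc m)" "v \<noteq> 0\<^sub>v (Suc m)"
    and eigen: "\<forall>A\<in>set As. \<exists>e. A *\<^sub>v v = e \<cdot>\<^sub>v v"
    by (rule common_eigenvector[OF zero_less_Suc car comm])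
  obtain W W' where W: "W \<in> carrier_mat (Suc m) (Suc m)" and W': "W' \<in> carrier_mat (Suc m) (Suc m)"
    and WW': "W * W' = 1\<^sub>m (Suc m)" and W'W: "W' * W = 1\<^sub>m (Suc m)" and "col W 0 = v"
    by (rule invertible_mat_first_column[OF v])
  define lower where "lower A = (SOME A3. A3 \<in> carrier_mat m m \<and> (\<exists>A1 A2. A1 \<in> carrier_mat 1 1
      \<and> A2 \<in> carrier_mat 1 m \<and> W' * A * W = four_block_mat A1 A2 (0\<^sub>m m 1) A3))" for A
  have "lower A \<in> carrier_mat m m \<and> (\<exists>A1 A2. A1 \<in> carrier_mat 1 1
      \<and> A2 \<in> carrier_mat 1 m \<and> W' * A * W = four_block_mat A1 A2 (0\<^sub>m m 1) (lower A))" if A: "A \<in> set As" for A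
  proof -
    obtain e where "A *\<^sub>v col W 0 = e \<cdot>\<^sub>v col W 0"
      using eigen A \<open>col W 0 = v\<close> by blast
    then obtain A1 A2 A3 where "A1 \<in> carrier_mat 1 1" "A2 \<in> carrier_mat 1 m" "A3 \<in> carrier_mat m m"
      "W' * A * W = four_block_mat A1 A2 (0\<^sub>m m 1) A3"
      by (rule eigenvector_block_form[OF W W' W'W bspec[OF car A]])
    then show ?thesis
      unfolding lower_def by (intro someI_ex[of "\<lambda>A3. A3 \<in> carrier_mat m m \<and> _ A3"]) blast
  qed
  then have lower: "\<forall>A\<in>set As. lower A \<in> carrier_mat m m \<and> (\<exists>A1 A2. A1 \<in> carrier_mat 1 1
      \<and> A2 \<in> carrier_mat 1 m \<and> W' * A * W = four_block_mat A1 A2 (0\<^sub>m m 1) (lower A))"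
    by blast
  have commute: "lower A * lower B = lower B * lower A" if A_in: "A \<in> set As" and B_in: "B \<in> set As" for A B
  proof -
    obtain A1 A2 where A: "A1 \<in> carrier_mat 1 1" "A2 \<in> carrier_mat 1 m" "lower A \<in> carrier_mat m m"
      and A_block: "W' * A * W = four_block_mat A1 A2 (0\<^sub>m m 1) (lower A)"
      using lower A_in by blast
    obtain B1 B2 where B: "B1 \<in> carrier_mat 1 1" "B2 \<in> carrier_mat 1 m" "lower B \<in> carrier_mat m m"
      and B_block: "W' * B * W = four_block_mat B1 B2 (0\<^sub>m m 1) (lower B)"
      using lower B_in by blast
    have "(W' * A * W) * (W' * B * W) = W' * (A * B) * W"
      using car A_in B_in by (intro conjugate_mult_mat[OF _ _ W W' WW']) auto
    also have "\<dots> = (W' * B * W) * (W' * A * W)"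
      using car comm A_in B_in by (subst conjugate_mult_mat[OF _ _ W W' WW']) auto
    finally have "(W' * A * W) * (W' * B * W) = (W' * B * W) * (W' * A * W)" .
    then show ?thesis
      by (intro four_block_lower_right_commute[OF A B]) (simp only: A_block B_block)
  qed
  show ?thesis
    by (rule that[OF W W' WW' W'W lower]) (use commute in blast)
qed

lemma simultaneous_upper_triangular:
  fixes As :: "complex mat list"
  assumes "\<forall>A\<in>set As. A \<in> carrier_mat n n" and "\<forall>A\<in>set As. \<forall>B\<in>set As. A * B = B * A"
  shows "\<exists>P Q. P \<in> carrier_mat n n \<and> Q \<in> carrier_mat n n \<and> P * Q = 1\<^sub>m n \<and> Q * P = 1\<^sub>m n
    \<and> (\<forall>A\<in>set As. upper_triangular (Q * A * P))"
  using assms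
proof (induction n arbitrary: As)
  case 0
  then show ?case
    by (intro exI[of _ "1\<^sub>m 0"]) (auto simp: upper_triangular_def)
next
  case (Suc m)
  note car = Suc.prems(1) and comm = Suc.prems(2)
  obtain W W' lower where W: "W \<in> carrier_mat (Suc m) (Suc m)" and W': "W' \<in> carrier_mat (Suc m) (Suc m)"
    and WW': "W * W' = 1\<^sub>m (Suc m)" and W'W: "W' * W = 1\<^sub>m (Suc m)"
    and lower: "\<forall>A\<in>set As. lower A \<in> carrier_mat m m \<and> (\<exists>A1 A2. A1 \<in> carrier_mat 1 1
      \<and> A2 \<in> carrier_mat 1 m \<and> W' * A * W = four_block_mat A1 A2 (0\<^sub>m m 1) (lower A))"
    and "\<forall>A\<in>set As. \<forall>B\<in>set As. lower A * lower B = lower B * lower A"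
    by (rule commuting_block_form[OF car comm])
  then obtain P1 Q1 where P1: "P1 \<in> carrier_mat m m" and Q1: "Q1 \<in> carrier_mat m m"
    and P1Q1: "P1 * Q1 = 1\<^sub>m m" and Q1P1: "Q1 * P1 = 1\<^sub>m m"
    and triangular: "\<forall>A\<in>set As. upper_triangular (Q1 * lower A * P1)"
    using Suc.IH[of "map lower As"] lower by force
  define P' where "P' = four_block_mat (1\<^sub>m 1) (0\<^sub>m 1 m) (0\<^sub>m m 1) P1"
  define Q' where "Q' = four_block_mat (1\<^sub>m 1) (0\<^sub>m 1 m) (0\<^sub>m m 1) Q1"
  have P': "P' \<in> carrier_mat (Suc m) (Suc m)" and Q': "Q' \<in> carrier_mat (Suc m) (Suc m)"
    using four_block_carrier_mat[OF one_carrier_mat[of 1] P1] four_block_carrier_mat[OF one_carrier_mat[of 1] Q1]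
    by (simp_all add: P'_def Q'_def)
  have "P' * Q' = 1\<^sub>m (Suc m)" and "Q' * P' = 1\<^sub>m (Suc m)"
    using four_block_one_mult[OF P1 Q1, of 1] four_block_one_mult[OF Q1 P1, of 1] P1Q1 Q1P1
    by (simp_all add: P'_def Q'_def)
  note [simp] = assoc_mult_mat[of _ "Suc m" "Suc m" _ "Suc m" _ "Suc m"]
  have "(W * P') * (Q' * W') = W * (P' * Q') * W'" and "(Q' * W') * (W * P') = Q' * (W' * W) * P'"
    using W W' P' Q' by simp_all
  then have "(W * P') * (Q' * W') = 1\<^sub>m (Suc m)" and "(Q' * W') * (W * P') = 1\<^sub>m (Suc m)"
    using W W' P' Q' WW' W'W \<open>P' * Q' = 1\<^sub>m (Suc m)\<close> \<open>Q' * P' = 1\<^sub>m (Suc m)\<close> by simp_all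
  moreover have "upper_triangular ((Q' * W') * A * (W * P'))" if A_in: "A \<in> set As" for A
  proof -
    obtain A1 A2 where A1: "A1 \<in> carrier_mat 1 1" and A2: "A2 \<in> carrier_mat 1 m"
      and A3: "lower A \<in> carrier_mat m m" and A_block: "W' * A * W = four_block_mat A1 A2 (0\<^sub>m m 1) (lower A)"
      using lower A_in by blast
    have "(Q' * W') * A * (W * P') = Q' * (W' * A * W) * P'"
      using W W' P' Q' bspec[OF car A_in] by simp
    also have "\<dots> = four_block_mat A1 (A2 * P1) (0\<^sub>m m 1) (Q1 * lower A * P1)"
      unfolding A_block P'_def Q'_def by (rule four_block_conjugate[OF A1 A2 A3 P1 Q1])
    moreover have "upper_triangular A1"
      using A1 by (auto simp: upper_triangular_def)
    ultimately show ?thesis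
      using upper_triangular_four_block[OF A1 _ _ bspec[OF triangular A_in]] A3 P1 Q1 by simp
  qed
  moreover have "W * P' \<in> carrier_mat (Suc m) (Suc m)" and "Q' * W' \<in> carrier_mat (Suc m) (Suc m)"
    using W W' P' Q' by (metis mult_carrier_mat)+
  ultimately show ?case
    by blast
qed

lemma index_mult_mat_conjugate:
  fixes Q X P :: "'a::comm_ring_1 mat"
  assumes "Q \<in> carrier_mat d d" "X \<in> carrier_mat d d" "P \<in> carrier_mat d d" and "a < d" "b < d"
  shows "(Q * X * P) $$ (a, b) = (\<Sum>k<d. \<Sum>l<d. Q $$ (a, k) * X $$ (k, l) * P $$ (l, b))"
  using assms by (simp add: scalar_prod_def atLeast0LessThan sum_distrib_left mult.assoc)

lemma conjugate_mat_lincomb: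
  fixes Q P :: "'a::comm_ring_1 mat"
  assumes Q: "Q \<in> carrier_mat d d" and P: "P \<in> carrier_mat d d" and F: "\<And>i. F i \<in> carrier_mat d d"
  shows "Q * mat d d (\<lambda>(a, b). \<Sum>i<n. w i * F i $$ (a, b)) * P
    = mat d d (\<lambda>(a, b). \<Sum>i<n. w i * (Q * F i * P) $$ (a, b))"
proof (rule eq_matI)
  fix a b assume "a < dim_row (mat d d (\<lambda>(a, b). \<Sum>i<n. w i * (Q * F i * P) $$ (a, b)))"
    and "b < dim_col (mat d d (\<lambda>(a, b). \<Sum>i<n. w i * (Q * F i * P) $$ (a, b)))"
  then have a: "a < d" and b: "b < d"
    by simp_all
  have "(Q * mat d d (\<lambda>(a, b). \<Sum>i<n. w i * F i $$ (a, b)) * P) $$ (a, b)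
      = (\<Sum>k<d. \<Sum>l<d. \<Sum>i<n. w i * (Q $$ (a, k) * F i $$ (k, l) * P $$ (l, b)))"
    by (subst index_mult_mat_conjugate[OF Q _ P a b]) (simp_all add: a b sum_distrib_left sum_distrib_right ac_simps)
  also have "\<dots> = (\<Sum>i<n. w i * (\<Sum>k<d. \<Sum>l<d. Q $$ (a, k) * F i $$ (k, l) * P $$ (l, b)))"
    by (simp add: sum_distrib_left sum.swap[of _ "{..<n}"])
  also have "\<dots> = (\<Sum>i<n. w i * (Q * F i * P) $$ (a, b))"
    by (simp add: index_mult_mat_conjugate[OF Q F P a b])
  finally show "(Q * mat d d (\<lambda>(a, b). \<Sum>i<n. w i * F i $$ (a, b)) * P) $$ (a, b)
      = mat d d (\<lambda>(a, b). \<Sum>i<n. w i * (Q * F i * P) $$ (a, b)) $$ (a, b)"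
    using a b by simp
qed (use Q P in simp_all)

section \<open>The monoid of the polynomials f_phi\<close>

lemma char_poly_fun_conjugate:
  assumes \<phi>: "\<And>x. \<phi> x \<in> carrier_mat d d" and P: "P \<in> carrier_mat d d" and Q: "Q \<in> carrier_mat d d"
    and QP: "Q * P = 1\<^sub>m d"
  shows "char_poly_fun hs d (\<lambda>x. Q * \<phi> x * P) = char_poly_fun hs d \<phi>"
proof
  fix z
  let ?n = "length hs"
  let ?F = "\<lambda>\<psi> i. if i = 0 then 1\<^sub>m d else \<psi> (hs ! (i - 1))"
  have as_lincomb: "mat d d (\<lambda>(a, b). z 0 * (if a = b then 1 else 0) + (\<Sum>i<?n. z (Suc i) * \<psi> (hs ! i) $$ (a, b)))
      = mat d d (\<lambda>(a, b). \<Sum>i<Suc ?n. z i * ?F \<psi> i $$ (a, b))" for \<psi> :: "'a \<Rightarrow> complex mat"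
    by (rule eq_matI) (auto simp del: sum.lessThan_Suc simp add: sum.lessThan_Suc_shift)
  have F: "?F \<phi> i \<in> carrier_mat d d" for i
    using \<phi> by simp
  have conj_F: "Q * ?F \<phi> i * P = ?F (\<lambda>x. Q * \<phi> x * P) i" for i
    using P Q QP by simp
  define X where "X = mat d d (\<lambda>(a, b). \<Sum>i<Suc ?n. z i * ?F \<phi> i $$ (a, b))"
  have X: "X \<in> carrier_mat d d"
    by (simp add: X_def)
  have "char_poly_fun hs d (\<lambda>x. Q * \<phi> x * P) z = det (Q * X * P)"
    unfolding char_poly_fun_def as_lincomb[of "\<lambda>x. Q * \<phi> x * P"] X_def conjugate_mat_lincomb[OF Q P F] conj_F ..
  also have "\<dots> = det X * det (Q * P)"
    using Q X P by (simp add: det_mult[of _ d])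
  also have "\<dots> = char_poly_fun hs d \<phi> z"
    by (simp add: QP char_poly_fun_def as_lincomb[of \<phi>] X_def)
  finally show "char_poly_fun hs d (\<lambda>x. Q * \<phi> x * P) z = char_poly_fun hs d \<phi> z" .
qed

lemma lie_rep_conjugate:
  assumes \<phi>: "lie_rep sc br d \<phi>" and P: "P \<in> carrier_mat d d" and Q: "Q \<in> carrier_mat d d"
    and PQ: "P * Q = 1\<^sub>m d"
  shows "lie_rep sc br d (\<lambda>x. Q * \<phi> x * P)"
proof -
  have car: "\<And>x. \<phi> x \<in> carrier_mat d d" and add: "\<And>x y. \<phi> (x + y) = \<phi> x + \<phi> y"
    and smult: "\<And>c x. \<phi> (sc c x) = c \<cdot>\<^sub>m \<phi> x"
    and bracket: "\<And>x y. \<phi> (br x y) = \<phi> x * \<phi> y - \<phi> y * \<phi> x"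
    using \<phi> unfolding lie_rep_def by blast+
  show ?thesis
    unfolding lie_rep_def
  proof (intro conjI allI)
    fix x y
    show "Q * \<phi> (x + y) * P = Q * \<phi> x * P + Q * \<phi> y * P"
      unfolding add mult_add_distrib_mat[OF Q car car]
      by (rule add_mult_distrib_mat[OF mult_carrier_mat[OF Q car] mult_carrier_mat[OF Q car] P])
    have xy: "\<phi> x * \<phi> y \<in> carrier_mat d d" and yx: "\<phi> y * \<phi> x \<in> carrier_mat d d"
      by (rule mult_carrier_mat[OF car car])+
    have "Q * \<phi> (br x y) * P = Q * (\<phi> x * \<phi> y) * P - Q * (\<phi> y * \<phi> x) * P"
      unfolding bracket mult_minus_distrib_mat[OF Q xy yx]
      by (rule minus_mult_distrib_mat[OF mult_carrier_mat[OF Q xy] mult_carrier_mat[OF Q yx] P])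
    then show "Q * \<phi> (br x y) * P = Q * \<phi> x * P * (Q * \<phi> y * P) - Q * \<phi> y * P * (Q * \<phi> x * P)"
      by (simp only: conjugate_mult_mat[OF car car P Q PQ])
  next
    fix c x
    show "Q * \<phi> (sc c x) * P = c \<cdot>\<^sub>m (Q * \<phi> x * P)"
      unfolding smult mult_smult_distrib[OF Q car] by (rule mult_smult_assoc_mat[OF mult_carrier_mat[OF Q car] P])
  qed (rule mult_carrier_mat[OF mult_carrier_mat[OF Q car] P])
qed

lemma lie_rep_commute:
  assumes \<phi>: "lie_rep sc br d \<phi>" and "br a b = 0"
  shows "\<phi> a * \<phi> b = \<phi> b * \<phi> a"
proof -
  have c: "\<And>x. \<phi> x \<in> carrier_mat d d" and add: "\<And>x y. \<phi> (x + y) = \<phi> x + \<phi> y"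
    and bracket: "\<And>x y. \<phi> (br x y) = \<phi> x * \<phi> y - \<phi> y * \<phi> x"
    using \<phi> unfolding lie_rep_def by blast+
  have zero: "\<phi> 0 $$ (i, j) = 0" if "i < d" "j < d" for i j
  proof -
    have "\<phi> 0 $$ (i, j) = (\<phi> 0 + \<phi> 0) $$ (i, j)"
      using add[of 0 0] by simp
    then show ?thesis
      using c[of 0] that by simp
  qed
  show ?thesis
  proof (rule eq_matI)
    fix i j assume "i < dim_row (\<phi> b * \<phi> a)" and "j < dim_col (\<phi> b * \<phi> a)"
    then have i: "i < d" and j: "j < d"
      using c[of a] c[of b] by simp_all
    have "(\<phi> a * \<phi> b - \<phi> b * \<phi> a) $$ (i, j) = 0"
      using bracket[of a b] \<open>br a b = 0\<close> zero[OF i j] by simp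
    then show "(\<phi> a * \<phi> b) $$ (i, j) = (\<phi> b * \<phi> a) $$ (i, j)"
      using c[of a] c[of b] i j by simp
  qed (use c[of a] c[of b] in simp_all)
qed

lemma lie_rep_triangularize:
  assumes \<phi>: "lie_rep sc br d \<phi>"
    and comm: "\<forall>x\<in>set hs. \<forall>y\<in>set hs. br x y = 0"
  obtains \<phi>' where "lie_rep sc br d \<phi>'" and "char_poly_fun hs d \<phi>' = char_poly_fun hs d \<phi>"
    and "\<forall>i<length hs. upper_triangular (\<phi>' (hs ! i))"
proof -
  have c: "\<And>x. \<phi> x \<in> carrier_mat d d"
    using \<phi> unfolding lie_rep_def by blast
  have "\<forall>A\<in>set (map \<phi> hs). A \<in> carrier_mat d d"
    using c by simp
  moreover have "\<forall>A\<in>set (map \<phi> hs). \<forall>B\<in>set (map \<phi> hs). A * B = B * A"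
    using lie_rep_commute[OF \<phi>] comm by auto
  ultimately obtain P Q where P: "P \<in> carrier_mat d d" and Q: "Q \<in> carrier_mat d d"
    and PQ: "P * Q = 1\<^sub>m d" and QP: "Q * P = 1\<^sub>m d"
    and triangular: "\<forall>A\<in>set (map \<phi> hs). upper_triangular (Q * A * P)"
    using simultaneous_upper_triangular by blast
  show ?thesis
  proof (rule that)
    show "lie_rep sc br d (\<lambda>x. Q * \<phi> x * P)"
      by (rule lie_rep_conjugate[OF \<phi> P Q PQ])
    show "char_poly_fun hs d (\<lambda>x. Q * \<phi> x * P) = char_poly_fun hs d \<phi>"
      by (rule char_poly_fun_conjugate[OF c P Q QP])
    show "\<forall>i<length hs. upper_triangular (Q * \<phi> (hs ! i) * P)"
      using triangular by simp
  qed
qed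

lemma CP_triangular_rep:
  assumes L: "lie_algebra sc br" and T: "toral sc br H" and hs: "set hs \<subseteq> H"
    and "F \<in> CP sc br hs"
  obtains d \<phi> where "lie_rep sc br d \<phi>" and "\<forall>i<length hs. \<phi> (hs ! i) \<in> carrier_mat d d"
    and "\<forall>i<length hs. upper_triangular (\<phi> (hs ! i))" and "F = lin_prod (length hs) (diag_weights hs d \<phi>)"
proof -
  obtain d \<phi> where \<phi>: "lie_rep sc br d \<phi>" and F: "F = char_poly_fun hs d \<phi>"
    using \<open>F \<in> CP sc br hs\<close> unfolding CP_def by blast
  have "\<forall>x\<in>set hs. \<forall>y\<in>set hs. br x y = 0"
    using toral_abelian[OF L T] hs by blast
  then obtain \<phi>' where \<phi>': "lie_rep sc br d \<phi>'" and eq: "char_poly_fun hs d \<phi>' = char_poly_fun hs d \<phi>"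
    and triangular: "\<forall>i<length hs. upper_triangular (\<phi>' (hs ! i))"
    by (rule lie_rep_triangularize[OF \<phi>])
  have car: "\<forall>i<length hs. \<phi>' (hs ! i) \<in> carrier_mat d d"
    using \<phi>' unfolding lie_rep_def by blast
  show ?thesis
    using that[OF \<phi>' car triangular] F eq char_poly_fun_upper_triangular[OF car triangular] by simp
qed

lemma CP_res_prod_closed:
  assumes L: "lie_algebra sc br" and T: "toral sc br H" and hs: "set hs \<subseteq> H"
    and "F \<in> CP sc br hs" and "G \<in> CP sc br hs"
  shows "res_prod (length hs) F G \<in> CP sc br hs"
proof -
  obtain d \<phi> where \<phi>: "lie_rep sc br d \<phi>" and c\<phi>: "\<forall>i<length hs. \<phi> (hs ! i) \<in> carrier_mat d d"
    and u\<phi>: "\<forall>i<length hs. upper_triangular (\<phi> (hs ! i))" and F: "F = lin_prod (length hs) (diag_weights hs d \<phi>)"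
    by (rule CP_triangular_rep[OF L T hs \<open>F \<in> CP sc br hs\<close>])
  obtain e \<psi> where \<psi>: "lie_rep sc br e \<psi>" and c\<psi>: "\<forall>i<length hs. \<psi> (hs ! i) \<in> carrier_mat e e"
    and u\<psi>: "\<forall>i<length hs. upper_triangular (\<psi> (hs ! i))" and G: "G = lin_prod (length hs) (diag_weights hs e \<psi>)"
    by (rule CP_triangular_rep[OF L T hs \<open>G \<in> CP sc br hs\<close>])
  define \<rho> where "\<rho> x = kronecker_sum (\<phi> x) (\<psi> x)" for x
  have \<rho>: "lie_rep sc br (d * e) \<rho>"
    unfolding \<rho>_def by (rule lie_rep_kronecker_sum[OF \<phi> \<psi>])
  have c\<rho>: "\<forall>i<length hs. \<rho> (hs ! i) \<in> carrier_mat (d * e) (d * e)"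
    using c\<phi> c\<psi> by (simp add: \<rho>_def)
  have u\<rho>: "\<forall>i<length hs. upper_triangular (\<rho> (hs ! i))"
    using c\<phi> c\<psi> u\<phi> u\<psi> by (auto simp: \<rho>_def intro!: upper_triangular_kronecker_sum)
  have "res_prod (length hs) F G = lin_prod (length hs) (minkowski_mset (diag_weights hs d \<phi>) (diag_weights hs e \<psi>))"
    unfolding F G by (rule res_prod_lin_prod[OF diag_weights_length diag_weights_length])
  also have "\<dots> = char_poly_fun hs (d * e) \<rho>"
    unfolding \<rho>_def char_poly_fun_upper_triangular[OF c\<rho>[unfolded \<rho>_def] u\<rho>[unfolded \<rho>_def]]
    by (rule lin_prod_diag_weights_kronecker_sum[OF c\<phi> c\<psi>, symmetric])
  finally show ?thesis
    unfolding CP_def using \<rho> by blast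
qed

lemma CP_one: "(\<lambda>z. z 0) \<in> CP sc br hs"
proof -
  have rep: "lie_rep sc br 1 (\<lambda>_. 0\<^sub>m 1 1)"
    unfolding lie_rep_def by auto
  have "(\<lambda>z. z 0) = lin_prod (length hs) (diag_weights hs 1 (\<lambda>_. 0\<^sub>m 1 1))"
    by (simp add: fun_eq_iff lin_prod_diag_weights)
  also have "\<dots> = char_poly_fun hs 1 (\<lambda>_. 0\<^sub>m 1 1)"
    by (rule char_poly_fun_upper_triangular[symmetric]) (auto simp: upper_triangular_def)
  finally show ?thesis
    unfolding CP_def using rep by blast
qed

theorem theorem4p3:
  fixes sc :: "complex \<Rightarrow> 'g::ab_group_add \<Rightarrow> 'g"
    and br :: "'g \<Rightarrow> 'g \<Rightarrow> 'g"
    and H :: "'g set"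
    and al :: "('g \<Rightarrow> complex) list"
    and hs :: "'g list"
  assumes "lie_algebra sc br"
    and "finite_dim_lie sc"
    and "simple_lie sc br"
    and "cartan_subalgebra sc br H"
    and "simple_roots sc br H al"
    and "length hs = length al"
    and "\<forall>i<length al. is_coroot sc br H (al ! i) (hs ! i)"
  shows "comm_monoid \<lparr>carrier = CP sc br hs, monoid.mult = res_prod (length hs), one = (\<lambda>z. z 0)\<rparr>"
proof (rule comm_monoid_res_prod)
  have T: "toral sc br H"
    using assms(4) unfolding cartan_subalgebra_def by blast
  have hs: "set hs \<subseteq> H"
    using assms(6,7) unfolding is_coroot_def by (auto simp: in_set_conv_nth)
  show "CP sc br hs \<subseteq> lin_prod (length hs) ` {M. \<forall>c\<in>#M. length c = length hs}"
  proof
    fix F assume "F \<in> CP sc br hs"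
    then obtain d \<phi> where "F = lin_prod (length hs) (diag_weights hs d \<phi>)"
      by (rule CP_triangular_rep[OF assms(1) T hs])
    then show "F \<in> lin_prod (length hs) ` {M. \<forall>c\<in>#M. length c = length hs}"
      using diag_weights_length by blast
  qed
  show "(\<lambda>z. z 0) \<in> CP sc br hs"
    by (rule CP_one)
  show "\<forall>F\<in>CP sc br hs. \<forall>G\<in>CP sc br hs. res_prod (length hs) F G \<in> CP sc br hs"
    using CP_res_prod_closed[OF assms(1) T hs] by blast
qed

end
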